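(* (i) $\boldsymbol{\beta}_G\circ\boldsymbol{\beta}_G=0$. (ii) For all homogeneous $[a],[b]\in\mathrm{H}^*(G,\mathbb{F}_pG)$, with the cup product taken with respect to the pairing given by the multiplication $\mu$ of $\mathbb{F}_pG$, $$\boldsymbol{\beta}_G([a]\cup[b])=\boldsymbol{\beta}_G([a])\cup[b]+(-1)^{\deg[a]}[a]\cup\boldsymbol{\beta}_G([b]).$$ In particular $\mathrm{H}^*(G,\mathbb{F}_pG)$ is a DG-algebra with differential $\boldsymbol{\beta}_G$. (iii) For any field $k$ of characteristic $p$ there is a $k$-linear map $\boldsymbol{\beta}_G:\mathrm{H}^r(G,kG)\to\mathrm{H}^{r+1}(G,kG)$ (for all $r\ge0$), namely $\boldsymbol{\beta}_G(\gamma_i([f_i]))=\gamma_i(\beta_{G_i}([f_i]))$ for $[f_i]\in\mathrm{H}^*(G_i,k)$, which is a differential and satisfies the graded Leibniz rule, so that $\mathrm{H}^*(G,kG)$ is also a DG-algebra.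
   Context: Let $G$ be a finite group, $p$ a prime dividing $|G|$, $\mathbb{F}_p$ the field with $p$ elements; $G$ acts on its group algebras by conjugation. $\boldsymbol{\beta}_G:\mathrm{H}^r(G,\mathbb{F}_pG)\to\mathrm{H}^{r+1}(G,\mathbb{F}_pG)$ is the connecting homomorphism of the short exact sequence of $\mathbb{Z}G$-modules $0\to\mathbb{F}_pG\to\mathbb{Z}/p^2[G]\to\mathbb{F}_pG\to0$ (first map $\widehat ag\mapsto\overline{pa}g$, second map reduction of coefficients mod $p$). Let $g_1=1,\ldots,g_s$ be representatives of the conjugacy classes of $G$, $G_i=C_G(g_i)$, $\theta_{g_i}:k\to kG$, $\lambda\mapsto\lambda g_i$, and $\gamma_i=\mathrm{tr}_{G_i}^G\circ\theta_{g_i}^*:\mathrm{H}^*(G_i,k)\to\mathrm{H}^*(G,kG)$; by Siegel–Witherspoon the $\gamma_i$ induce an isomorphism of graded vector spaces $\bigoplus_i\mathrm{H}^*(G_i,k)\cong\mathrm{H}^*(G,kG)$. For a subgroup $H$, $\beta_H$ is the Bockstein of $\mathrm{H}^*(H,\mathbb{F}_p)$, extended to $\mathrm{H}^*(H,k)\cong\mathrm{H}^*(H,\mathbb{F}_p)\otimes_{\mathbb{F}_p}k$ as $\beta_H\otimes\mathrm{id}_k$. *)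

theory Defs
  imports "HOL-Algebra.Coset" "HOL-Library.Function_Algebras" "HOL-Computational_Algebra.Primes"
begin

text \<open>An n-cochain of a subgroup H of G with coefficients in an H-module (action act,
value carrier M) is an H-equivariant map on (n+1)-tuples of elements of G
(homogeneous standard resolution of G restricted to H), extended by 0 off the tuples.\<close>

definition tuples :: "('g,'b) monoid_scheme \<Rightarrow> nat \<Rightarrow> 'g list set" where
  "tuples G n = {xs. length xs = n \<and> set xs \<subseteq> carrier G}"

definition cochains ::
  "('g,'b) monoid_scheme \<Rightarrow> 'g set \<Rightarrow> ('g \<Rightarrow> 'm \<Rightarrow> 'm) \<Rightarrow> 'm::zero set \<Rightarrow> nat \<Rightarrow> ('g list \<Rightarrow> 'm) set" where
  "cochains G H act M n =
     {f. (\<forall>xs. xs \<notin> tuples G (Suc n) \<longrightarrow> f xs = 0)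
       \<and> (\<forall>xs\<in>tuples G (Suc n). f xs \<in> M)
       \<and> (\<forall>h\<in>H. \<forall>xs\<in>tuples G (Suc n). f (map (\<lambda>x. h \<otimes>\<^bsub>G\<^esub> x) xs) = act h (f xs))}"

definition del_at :: "nat \<Rightarrow> 'a list \<Rightarrow> 'a list" where
  "del_at i xs = take i xs @ drop (Suc i) xs"

definition cobound :: "('g,'b) monoid_scheme \<Rightarrow> nat \<Rightarrow> ('g list \<Rightarrow> 'm::ab_group_add) \<Rightarrow> 'g list \<Rightarrow> 'm" where
  "cobound G n f xs =
     (if xs \<in> tuples G (n + 2)
      then (\<Sum>i\<le>n+1. (if even i then f (del_at i xs) else - f (del_at i xs)))
      else 0)"

definition cobs ::
  "('g,'b) monoid_scheme \<Rightarrow> 'g set \<Rightarrow> ('g \<Rightarrow> 'm \<Rightarrow> 'm) \<Rightarrow> 'm::ab_group_add set \<Rightarrow> nat \<Rightarrow> ('g list \<Rightarrow> 'm) set" where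
  "cobs G H act M n = (case n of 0 \<Rightarrow> {0} | Suc m \<Rightarrow> cobound G m ` cochains G H act M m)"

section \<open>Group algebras R G (as canonical functions G \<rightarrow> R) with conjugation action\<close>

definition galg :: "('g,'b) monoid_scheme \<Rightarrow> ('g \<Rightarrow> 'r::zero) set" where
  "galg G = {a. \<forall>y. y \<notin> carrier G \<longrightarrow> a y = 0}"

text \<open>conjugation: \<open>h\<cdot>(\<Sum> a\<^sub>y y) = \<Sum> a\<^sub>y h y h\<inverse>\<close>\<close>
definition cact :: "('g,'b) monoid_scheme \<Rightarrow> 'g \<Rightarrow> ('g \<Rightarrow> 'r::zero) \<Rightarrow> 'g \<Rightarrow> 'r" where
  "cact G h a = (\<lambda>y. if y \<in> carrier G then a (inv\<^bsub>G\<^esub> h \<otimes>\<^bsub>G\<^esub> y \<otimes>\<^bsub>G\<^esub> h) else 0)"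

definition gmult :: "('g,'b) monoid_scheme \<Rightarrow> ('g \<Rightarrow> 'r::comm_ring_1) \<Rightarrow> ('g \<Rightarrow> 'r) \<Rightarrow> 'g \<Rightarrow> 'r" where
  "gmult G a b = (\<lambda>z. if z \<in> carrier G then (\<Sum>y\<in>carrier G. a y * b (inv\<^bsub>G\<^esub> y \<otimes>\<^bsub>G\<^esub> z)) else 0)"

definition cupc :: "('g,'b) monoid_scheme \<Rightarrow> ('m1 \<Rightarrow> 'm2 \<Rightarrow> 'm3::zero) \<Rightarrow> nat \<Rightarrow> nat
   \<Rightarrow> ('g list \<Rightarrow> 'm1) \<Rightarrow> ('g list \<Rightarrow> 'm2) \<Rightarrow> 'g list \<Rightarrow> 'm3" where
  "cupc G mu m n f g xs =
     (if xs \<in> tuples G (m + n + 1) then mu (f (take (m + 1) xs)) (g (drop m xs)) else 0)"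

text \<open>An \<open>\<bbbF>\<^sub>pG\<close>-valued n-cochain is represented by an equivariant \<open>\<int>G\<close>-valued lift;
two lifts are identified when they agree mod p.\<close>

definition Cint :: "('g,'b) monoid_scheme \<Rightarrow> nat \<Rightarrow> ('g list \<Rightarrow> 'g \<Rightarrow> int) set" where
  "Cint G n = cochains G (carrier G) (cact G) (galg G) n"

definition congp :: "int \<Rightarrow> ('g list \<Rightarrow> 'g \<Rightarrow> int) \<Rightarrow> ('g list \<Rightarrow> 'g \<Rightarrow> int) \<Rightarrow> bool" where
  "congp p f g \<longleftrightarrow> (\<forall>xs y. p dvd (f xs y - g xs y))"

definition Zp :: "('g,'b) monoid_scheme \<Rightarrow> int \<Rightarrow> nat \<Rightarrow> ('g list \<Rightarrow> 'g \<Rightarrow> int) set" where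
  "Zp G p n = {f \<in> Cint G n. congp p (cobound G n f) 0}"

definition clsp :: "('g,'b) monoid_scheme \<Rightarrow> int \<Rightarrow> nat \<Rightarrow> ('g list \<Rightarrow> 'g \<Rightarrow> int) \<Rightarrow> ('g list \<Rightarrow> 'g \<Rightarrow> int) set" where
  "clsp G p n f = {g \<in> Cint G n. \<exists>b\<in>cobs G (carrier G) (cact G) (galg G) n. congp p (g - f) b}"

definition Hp :: "('g,'b) monoid_scheme \<Rightarrow> int \<Rightarrow> nat \<Rightarrow> ('g list \<Rightarrow> 'g \<Rightarrow> int) set set" where
  "Hp G p n = clsp G p n ` Zp G p n"

definition rep :: "'a set \<Rightarrow> 'a" where
  "rep X = (SOME f. f \<in> X)"

text \<open>Connecting homomorphism of \<open>0\<rightarrow>\<bbbF>\<^sub>pG\<rightarrow>\<int>/p\<^sup>2[G]\<rightarrow>\<bbbF>\<^sub>pG\<rightarrow>0\<close> on cochain level: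
lift to \<open>\<int>/p\<^sup>2\<close> (the integer lift), apply \<open>\<delta>\<close>, pull back along \<open>x \<mapsto> px\<close>.\<close>
definition bockc :: "('g,'b) monoid_scheme \<Rightarrow> int \<Rightarrow> nat \<Rightarrow> ('g list \<Rightarrow> 'g \<Rightarrow> int) \<Rightarrow> 'g list \<Rightarrow> 'g \<Rightarrow> int" where
  "bockc G p n f = (\<lambda>xs y. cobound G n f xs y div p)"

definition BockG :: "('g,'b) monoid_scheme \<Rightarrow> int \<Rightarrow> nat \<Rightarrow> ('g list \<Rightarrow> 'g \<Rightarrow> int) set \<Rightarrow> ('g list \<Rightarrow> 'g \<Rightarrow> int) set" where
  "BockG G p n X = clsp G p (Suc n) (bockc G p n (rep X))"

definition Cup_p :: "('g,'b) monoid_scheme \<Rightarrow> int \<Rightarrow> nat \<Rightarrow> nat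
   \<Rightarrow> ('g list \<Rightarrow> 'g \<Rightarrow> int) set \<Rightarrow> ('g list \<Rightarrow> 'g \<Rightarrow> int) set \<Rightarrow> ('g list \<Rightarrow> 'g \<Rightarrow> int) set" where
  "Cup_p G p m n X Y = clsp G p (m + n) (cupc G (gmult G) m n (rep X) (rep Y))"

definition Add_p :: "('g,'b) monoid_scheme \<Rightarrow> int \<Rightarrow> nat
   \<Rightarrow> ('g list \<Rightarrow> 'g \<Rightarrow> int) set \<Rightarrow> ('g list \<Rightarrow> 'g \<Rightarrow> int) set \<Rightarrow> ('g list \<Rightarrow> 'g \<Rightarrow> int) set" where
  "Add_p G p n X Y = clsp G p n (rep X + rep Y)"

definition Smul_p :: "('g,'b) monoid_scheme \<Rightarrow> int \<Rightarrow> nat \<Rightarrow> int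
   \<Rightarrow> ('g list \<Rightarrow> 'g \<Rightarrow> int) set \<Rightarrow> ('g list \<Rightarrow> 'g \<Rightarrow> int) set" where
  "Smul_p G p n c X = clsp G p n (\<lambda>xs y. c * rep X xs y)"

definition Ck :: "('g,'b) monoid_scheme \<Rightarrow> nat \<Rightarrow> ('g list \<Rightarrow> 'g \<Rightarrow> 'k::field) set" where
  "Ck G n = cochains G (carrier G) (cact G) (galg G) n"

definition clsk :: "('g,'b) monoid_scheme \<Rightarrow> nat \<Rightarrow> ('g list \<Rightarrow> 'g \<Rightarrow> 'k::field) \<Rightarrow> ('g list \<Rightarrow> 'g \<Rightarrow> 'k) set" where
  "clsk G n f = {g \<in> Ck G n. g - f \<in> cobs G (carrier G) (cact G) (galg G) n}"

definition Hk :: "('g,'b) monoid_scheme \<Rightarrow> nat \<Rightarrow> ('g list \<Rightarrow> 'g \<Rightarrow> 'k::field) set set" where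
  "Hk G n = clsk G n ` {f \<in> Ck G n. cobound G n f = 0}"

definition Add_k :: "('g,'b) monoid_scheme \<Rightarrow> nat
   \<Rightarrow> ('g list \<Rightarrow> 'g \<Rightarrow> 'k::field) set \<Rightarrow> ('g list \<Rightarrow> 'g \<Rightarrow> 'k) set \<Rightarrow> ('g list \<Rightarrow> 'g \<Rightarrow> 'k) set" where
  "Add_k G n X Y = clsk G n (rep X + rep Y)"

definition Smul_k :: "('g,'b) monoid_scheme \<Rightarrow> nat \<Rightarrow> 'k::field
   \<Rightarrow> ('g list \<Rightarrow> 'g \<Rightarrow> 'k) set \<Rightarrow> ('g list \<Rightarrow> 'g \<Rightarrow> 'k) set" where
  "Smul_k G n c X = clsk G n (\<lambda>xs y. c * rep X xs y)"

definition Cup_k :: "('g,'b) monoid_scheme \<Rightarrow> nat \<Rightarrow> nat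
   \<Rightarrow> ('g list \<Rightarrow> 'g \<Rightarrow> 'k::field) set \<Rightarrow> ('g list \<Rightarrow> 'g \<Rightarrow> 'k) set \<Rightarrow> ('g list \<Rightarrow> 'g \<Rightarrow> 'k) set" where
  "Cup_k G m n X Y = clsk G (m + n) (cupc G (gmult G) m n (rep X) (rep Y))"

definition centralizer :: "('g,'b) monoid_scheme \<Rightarrow> 'g \<Rightarrow> 'g set" where
  "centralizer G g = {h \<in> carrier G. h \<otimes>\<^bsub>G\<^esub> g = g \<otimes>\<^bsub>G\<^esub> h}"

definition Ct :: "('g,'b) monoid_scheme \<Rightarrow> 'g set \<Rightarrow> nat \<Rightarrow> ('g list \<Rightarrow> 'k::field) set" where
  "Ct G H n = cochains G H (\<lambda>h a. a) UNIV n"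

definition clst :: "('g,'b) monoid_scheme \<Rightarrow> 'g set \<Rightarrow> nat \<Rightarrow> ('g list \<Rightarrow> 'k::field) \<Rightarrow> ('g list \<Rightarrow> 'k) set" where
  "clst G H n f = {g \<in> Ct G H n. g - f \<in> cobs G H (\<lambda>h a. a) UNIV n}"

definition Ht :: "('g,'b) monoid_scheme \<Rightarrow> 'g set \<Rightarrow> nat \<Rightarrow> ('g list \<Rightarrow> 'k::field) set set" where
  "Ht G H n = clst G H n ` {f \<in> Ct G H n. cobound G n f = 0}"

text \<open>\<open>\<bbbF>\<^sub>p\<close>-cocycles of H with trivial coefficients (integer lifts), and the Bockstein
\<open>\<beta>\<^sub>H\<close> on them; \<open>\<beta>\<^sub>H \<otimes> id\<^sub>k\<close> on \<open>H\<^sup>*(H,k) = H\<^sup>*(H,\<bbbF>\<^sub>p)\<otimes>k\<close> is given by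
\<open>[\<Sum> \<lambda>\<^sub>j \<phi>\<^sub>j] \<mapsto> [\<Sum> \<lambda>\<^sub>j \<beta>\<^sub>H \<phi>\<^sub>j]\<close>.\<close>
definition Ztp :: "('g,'b) monoid_scheme \<Rightarrow> 'g set \<Rightarrow> int \<Rightarrow> nat \<Rightarrow> ('g list \<Rightarrow> int) set" where
  "Ztp G H p n = {f \<in> cochains G H (\<lambda>h a. a) UNIV n. \<forall>xs. p dvd cobound G n f xs}"

definition kcomb :: "('k::field \<times> ('g list \<Rightarrow> int)) list \<Rightarrow> 'g list \<Rightarrow> 'k" where
  "kcomb L = (\<lambda>xs. \<Sum>j<length L. fst (L ! j) * of_int (snd (L ! j) xs))"

definition BockH :: "('g,'b) monoid_scheme \<Rightarrow> 'g set \<Rightarrow> int \<Rightarrow> nat \<Rightarrow> ('g list \<Rightarrow> 'k::field) set \<Rightarrow> ('g list \<Rightarrow> 'k) set" where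
  "BockH G H p n X =
     (let L = (SOME L. (\<forall>j<length L. snd (L ! j) \<in> Ztp G H p n) \<and> clst G H n (kcomb L) = X)
      in clst G H (Suc n) (kcomb (map (\<lambda>(c, \<phi>). (c, \<lambda>xs. cobound G n \<phi> xs div p)) L)))"

definition thetac :: "('g,'b) monoid_scheme \<Rightarrow> 'g \<Rightarrow> ('g list \<Rightarrow> 'k::field) \<Rightarrow> 'g list \<Rightarrow> 'g \<Rightarrow> 'k" where
  "thetac G g f = (\<lambda>xs y. if y = g then f xs else 0)"

definition ltransversal :: "('g,'b) monoid_scheme \<Rightarrow> 'g set \<Rightarrow> 'g set" where
  "ltransversal G H = (SOME T. T \<subseteq> carrier G \<and> (\<forall>x\<in>carrier G. \<exists>!t. t \<in> T \<and> x \<in> t <#\<^bsub>G\<^esub> H))"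

definition trc :: "('g,'b) monoid_scheme \<Rightarrow> 'g set \<Rightarrow> ('g list \<Rightarrow> 'g \<Rightarrow> 'k::field) \<Rightarrow> 'g list \<Rightarrow> 'g \<Rightarrow> 'k" where
  "trc G H f = (\<lambda>xs. if set xs \<subseteq> carrier G
      then (\<Sum>t\<in>ltransversal G H. cact G t (f (map (\<lambda>x. inv\<^bsub>G\<^esub> t \<otimes>\<^bsub>G\<^esub> x) xs)))
      else 0)"

definition gamma :: "('g,'b) monoid_scheme \<Rightarrow> 'g \<Rightarrow> nat \<Rightarrow> ('g list \<Rightarrow> 'k::field) set \<Rightarrow> ('g list \<Rightarrow> 'g \<Rightarrow> 'k) set" where
  "gamma G g n X = clsk G n (trc G (centralizer G g) (thetac G g (rep X)))"

end

theory Submission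
  imports Defs "HOL.Modules"
begin

text \<open>
  An \<open>\<bbbF>\<^sub>pG\<close>-valued cochain is represented by an integral lift \<open>f\<close>, and the Bockstein of its
  class is the class of \<open>\<delta>f / p\<close>. This is an integral cocycle because \<open>\<delta>\<delta> = 0\<close>, so its own
  Bockstein vanishes; dividing the cochain-level Leibniz rule
  \<open>\<delta>(f \<union> g) = \<delta>f \<union> g + (-1)\<^sup>m f \<union> \<delta>g\<close> by \<open>p\<close> gives the Leibniz rule for the Bockstein.

  For a field \<open>k\<close> of characteristic \<open>p\<close>, expand the values of a \<open>kG\<close>-cocycle along a list of
  elements of \<open>k\<close> that is linearly independent over \<open>\<bbbF>\<^sub>p\<close>: this writes it as \<open>\<Sum> c\<^sub>j \<phi>\<^sub>j\<close>
  with integral cochains \<open>\<phi>\<^sub>j\<close> that are cocycles modulo \<open>p\<close>, and \<open>\<beta>(\<Sum> c\<^sub>j \<phi>\<^sub>j) = \<Sum> c\<^sub>j \<beta>(\<phi>\<^sub>j)\<close>.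
  Independence modulo \<open>p\<close> makes this well defined on classes, and all identities reduce to the
  integral ones. Transfer and \<open>\<theta>\<^sub>g\<close> commute with \<open>\<delta>\<close> and with division by \<open>p\<close>, which gives
  \<open>\<beta> \<circ> \<gamma>\<^sub>g = \<gamma>\<^sub>g \<circ> \<beta>\<^sub>H\<close> for \<open>H = C\<^sub>G(g)\<close>.
\<close>

definition signed :: "nat \<Rightarrow> 'a::ab_group_add \<Rightarrow> 'a" where
  "signed i a = (if even i then a else - a)"

lemma signed_0: "signed 0 a = a"
  by (simp add: signed_def)

lemma signed_parity: "even i = even j \<Longrightarrow> signed i a = signed j a"
  by (simp add: signed_def)

lemma signed_Suc: "signed (Suc i) a = - signed i a"
  by (simp add: signed_def)

lemma signed_signed: "signed i (signed j a) = signed (i + j) a"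
  by (simp add: signed_def)

lemma signed_signed_cancel: "signed i (signed i a) = a"
  by (simp add: signed_def)

lemma signed_fun_eq_power: "(\<lambda>x. signed i (F x)) = (\<lambda>x y. (-1) ^ i * (F x y :: 'r::ring_1))"
  by (simp add: signed_def fun_eq_iff)

lemma signed_zero [simp]: "signed i 0 = 0"
  by (simp add: signed_def)

lemma additive_signed: "additive (signed i)"
  by unfold_locales (simp add: signed_def)

lemmas signed_add = additive.add[OF additive_signed]
lemmas signed_sum = additive.sum[OF additive_signed]

lemma signed_additive: "additive \<phi> \<Longrightarrow> \<phi> (signed i a) = signed i (\<phi> a)"
  by (simp add: signed_def additive.minus)

lemma signed_fun_apply: "signed i (F :: 'a \<Rightarrow> 'b::ab_group_add) y = signed i (F y)"
  by (simp add: signed_def)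

lemma additive_mult_left: "additive (\<lambda>a. c * (a :: 'a::ring))"
  by unfold_locales (simp add: distrib_left)

lemma additive_pointwise: "additive \<phi> \<Longrightarrow> additive (\<lambda>a y. \<phi> (a y))"
  by unfold_locales (simp add: fun_eq_iff additive.add)

lemma sum_fun_apply: "(sum g A) x = sum (\<lambda>j. g j x) A"
  by (induction A rule: infinite_finite_induct) auto

lemma mem_tuples_iff: "xs \<in> tuples G n \<longleftrightarrow> length xs = n \<and> set xs \<subseteq> carrier G"
  by (simp add: tuples_def)

lemma finite_tuples: "finite (carrier G) \<Longrightarrow> finite (tuples G n)"
  using finite_lists_length_eq[of "carrier G" n] by (simp add: tuples_def conj_commute)

lemma take_in_tuples: "xs \<in> tuples G k \<Longrightarrow> j \<le> k \<Longrightarrow> take j xs \<in> tuples G j"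
  by (auto simp: mem_tuples_iff dest: in_set_takeD)

lemma drop_in_tuples: "xs \<in> tuples G k \<Longrightarrow> drop j xs \<in> tuples G (k - j)"
  by (auto simp: mem_tuples_iff dest: in_set_dropD)

lemma map_mult_in_tuples:
  "group G \<Longrightarrow> h \<in> carrier G \<Longrightarrow> xs \<in> tuples G n \<Longrightarrow> map (\<lambda>x. h \<otimes>\<^bsub>G\<^esub> x) xs \<in> tuples G n"
  by (auto simp: mem_tuples_iff intro: group.subgroup_self[THEN subgroup.m_closed])

lemma length_del_at: "length (del_at i xs) = (if i < length xs then length xs - 1 else length xs)"
  by (simp add: del_at_def)

lemma set_del_at: "set (del_at i xs) \<subseteq> set xs"
  unfolding del_at_def by (auto dest: in_set_takeD in_set_dropD)

lemma del_at_in_tuples: "xs \<in> tuples G (Suc n) \<Longrightarrow> i \<le> n \<Longrightarrow> del_at i xs \<in> tuples G n"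
  using set_del_at[of i xs] by (auto simp: mem_tuples_iff length_del_at)

lemma del_at_map: "del_at i (map f xs) = map f (del_at i xs)"
  by (simp add: del_at_def take_map drop_map)

lemma nth_del_at:
  "i < length xs \<Longrightarrow> k < length xs - 1 \<Longrightarrow> del_at i xs ! k = (if k < i then xs ! k else xs ! Suc k)"
  by (auto simp: del_at_def nth_append min_def)

lemma del_at_commute:
  "a \<le> b \<Longrightarrow> Suc b < length xs \<Longrightarrow> del_at a (del_at (Suc b) xs) = del_at b (del_at a xs)"
proof (induction xs arbitrary: a b)
  case (Cons x xs)
  show ?case
  proof (cases a)
    case 0
    then show ?thesis using Cons.prems by (cases b) (auto simp: del_at_def)
  next
    case (Suc a')
    then obtain b' where b: "b = Suc b'" using Cons.prems by (cases b) auto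
    have "del_at a' (del_at (Suc b') xs) = del_at b' (del_at a' xs)"
      using Cons.prems Suc b by (intro Cons.IH) auto
    then show ?thesis using Suc b by (simp add: del_at_def)
  qed
qed simp

lemma cobound_eq:
  "cobound G n f xs =
     (if xs \<in> tuples G (n + 2) then (\<Sum>i\<le>n+1. signed i (f (del_at i xs))) else 0)"
  by (simp add: cobound_def signed_def)

lemma additive_cobound: "additive (cobound G n)"
  by unfold_locales (simp add: fun_eq_iff cobound_eq signed_add sum.distrib)

lemmas cobound_add = additive.add[OF additive_cobound]
lemmas cobound_minus = additive.minus[OF additive_cobound]
lemmas cobound_diff = additive.diff[OF additive_cobound]
lemmas cobound_zero [simp] = additive.zero[OF additive_cobound]
lemmas cobound_sum = additive.sum[OF additive_cobound]

lemma cobound_additive: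
  assumes "additive \<phi>"
  shows "cobound G n (\<lambda>xs. \<phi> (f xs)) = (\<lambda>xs. \<phi> (cobound G n f xs))"
  by (simp add: fun_eq_iff cobound_eq additive.zero[OF assms] additive.sum[OF assms]
      signed_additive[OF assms] del: sum.atMost_Suc)

lemma cobound_pointwise:
  "additive \<phi> \<Longrightarrow> cobound G n (\<lambda>xs y. \<phi> (f xs y)) = (\<lambda>xs y. \<phi> (cobound G n f xs y))"
  using cobound_additive[OF additive_pointwise, of \<phi> G n f] by simp

lemma cobound_scale: "cobound G n (\<lambda>xs y. c * f xs y) = (\<lambda>xs y. (c :: 'r::ring) * cobound G n f xs y)"
  by (rule cobound_pointwise[OF additive_mult_left])

lemma cobound_of_int:
  "cobound G n (\<lambda>xs y. of_int (f xs y) :: 'r::ring_1) = (\<lambda>xs y. of_int (cobound G n f xs y))"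
  by (rule cobound_pointwise) (unfold_locales, simp)

text \<open>In \<open>\<delta>\<delta>f\<close> the faces \<open>(i, j)\<close> with \<open>i \<le> j\<close> and \<open>(j + 1, i)\<close> remove the same two
  entries with opposite signs.\<close>
lemma cobound_cobound: "cobound G (Suc n) (cobound G n f) = 0"
proof (rule ext)
  fix xs
  show "cobound G (Suc n) (cobound G n f) xs = 0 xs"
  proof (cases "xs \<in> tuples G (n + 3)")
    case False
    then show ?thesis by (simp add: cobound_eq[of G "Suc n"] numeral_3_eq_3 del: sum.atMost_Suc)
  next
    case True
    hence len: "length xs = n + 3" by (simp add: mem_tuples_iff)
    define t where "t = (\<lambda>(i,j). signed (i + j) (f (del_at j (del_at i xs))))"
    define D where "D = {(i,j). i \<le> j \<and> j \<le> n+1}"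
    have inner: "cobound G n f (del_at i xs) = (\<Sum>j\<le>n+1. signed j (f (del_at j (del_at i xs))))"
      if "i \<le> n + 2" for i
    proof -
      have "xs \<in> tuples G (Suc (n+2))" using True by (simp add: numeral_3_eq_3)
      then have "del_at i xs \<in> tuples G (n+2)" using del_at_in_tuples[of xs G "n+2" i] that by simp
      then show ?thesis by (simp add: cobound_eq)
    qed
    have "cobound G (Suc n) (cobound G n f) xs = (\<Sum>i\<le>n+2. \<Sum>j\<le>n+1. t (i, j))"
      using True by (simp add: cobound_eq[of G "Suc n"] numeral_3_eq_3 inner signed_sum
          signed_signed t_def del: sum.atMost_Suc)
    also have "\<dots> = sum t ({..n+2} \<times> {..n+1})"
      by (simp only: sum.cartesian_product case_prod_eta)
    also have "{..n+2} \<times> {..n+1} = D \<union> {(i,j). j < i \<and> i \<le> n+2}"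
      by (auto simp: D_def)
    also have "sum t \<dots> = sum t D + sum t {(i,j). j < i \<and> i \<le> n+2}"
    proof (rule sum.union_disjoint)
      show "finite D" by (rule finite_subset[of _ "{..n+1} \<times> {..n+1}"]) (auto simp: D_def)
      show "finite {(i, j). j < i \<and> i \<le> n + 2}"
        by (rule finite_subset[of _ "{..n+2} \<times> {..n+2}"]) auto
    qed (auto simp: D_def)
    also have "sum t {(i,j). j < i \<and> i \<le> n+2} = sum (\<lambda>(a,b). t (Suc b, a)) D"
      by (rule sum.reindex_bij_witness[of _ "\<lambda>(a,b). (Suc b, a)" "\<lambda>(i,j). (j, i - 1)"])
        (auto simp: D_def)
    also have "\<dots> = sum (\<lambda>x. - t x) D"
    proof (rule sum.cong)
      fix x assume "x \<in> D"
      then obtain a b where x: "x = (a,b)" "a \<le> b" "b \<le> n+1" by (auto simp: D_def)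
      have "del_at a (del_at (Suc b) xs) = del_at b (del_at a xs)"
        using x len by (intro del_at_commute) auto
      then show "(\<lambda>(a,b). t (Suc b, a)) x = - t x"
        using x by (simp add: t_def signed_Suc add.commute)
    qed simp
    finally show ?thesis by (simp add: sum_negf)
  qed
qed

lemma cochainsI:
  assumes "\<And>xs. xs \<notin> tuples G (Suc n) \<Longrightarrow> f xs = 0"
    and "\<And>xs. xs \<in> tuples G (Suc n) \<Longrightarrow> f xs \<in> M"
    and "\<And>h xs. h \<in> H \<Longrightarrow> xs \<in> tuples G (Suc n) \<Longrightarrow> f (map (\<lambda>x. h \<otimes>\<^bsub>G\<^esub> x) xs) = act h (f xs)"
  shows "f \<in> cochains G H act M n"
  using assms by (simp add: cochains_def)

lemma cochainsD:
  assumes "f \<in> cochains G H act M n"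
  shows "xs \<notin> tuples G (Suc n) \<Longrightarrow> f xs = 0"
    and "xs \<in> tuples G (Suc n) \<Longrightarrow> f xs \<in> M"
    and "h \<in> H \<Longrightarrow> xs \<in> tuples G (Suc n) \<Longrightarrow> f (map (\<lambda>x. h \<otimes>\<^bsub>G\<^esub> x) xs) = act h (f xs)"
  using assms by (simp_all add: cochains_def)

lemma cupc_cochains:
  assumes G: "group G" and HG: "H \<subseteq> carrier G"
    and f: "f \<in> cochains G H act1 M1 m" and g: "g \<in> cochains G H act2 M2 n"
    and mu: "\<And>h a b. h \<in> H \<Longrightarrow> a \<in> M1 \<Longrightarrow> b \<in> M2 \<Longrightarrow> mu (act1 h a) (act2 h b) = act3 h (mu a b)"
    and muM: "\<And>a b. a \<in> M1 \<Longrightarrow> b \<in> M2 \<Longrightarrow> mu a b \<in> M3"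
  shows "cupc G mu m n f g \<in> cochains G H act3 M3 (m + n)"
proof (rule cochainsI)
  fix xs assume "xs \<notin> tuples G (Suc (m + n))"
  then show "cupc G mu m n f g xs = 0" by (simp add: cupc_def)
next
  fix xs assume xs: "xs \<in> tuples G (Suc (m + n))"
  have "take (m+1) xs \<in> tuples G (Suc m)" "drop m xs \<in> tuples G (Suc n)"
    using take_in_tuples[OF xs, of "m+1"] drop_in_tuples[OF xs, of m] by simp_all
  with xs show "cupc G mu m n f g xs \<in> M3"
    by (simp add: cupc_def muM cochainsD(2)[OF f] cochainsD(2)[OF g])
  fix h assume h: "h \<in> H"
  have "map (\<lambda>x. h \<otimes>\<^bsub>G\<^esub> x) xs \<in> tuples G (Suc (m + n))"
    using map_mult_in_tuples[OF G _ xs] h HG by blast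
  with xs h \<open>take (m+1) xs \<in> _\<close> \<open>drop m xs \<in> _\<close>
  show "cupc G mu m n f g (map (\<lambda>x. h \<otimes>\<^bsub>G\<^esub> x) xs) = act3 h (cupc G mu m n f g xs)"
    by (simp add: cupc_def take_map drop_map cochainsD(2,3)[OF f] cochainsD(2,3)[OF g] mu)
qed

lemma rep_mem: "x \<in> X \<Longrightarrow> rep X \<in> X"
  unfolding rep_def by (rule someI)

locale coeff_module =
  fixes G :: "('g, 'b) monoid_scheme" and H :: "'g set"
    and act :: "'g \<Rightarrow> 'm::ab_group_add \<Rightarrow> 'm" and M :: "'m set"
  assumes group: "group G" and subset: "H \<subseteq> carrier G"
    and additive_act: "h \<in> H \<Longrightarrow> additive (act h)"
    and zero_mem: "0 \<in> M" and add_mem: "a \<in> M \<Longrightarrow> b \<in> M \<Longrightarrow> a + b \<in> M"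
    and minus_mem: "a \<in> M \<Longrightarrow> - a \<in> M"
begin

abbreviation C :: "nat \<Rightarrow> ('g list \<Rightarrow> 'm) set" where
  "C n \<equiv> cochains G H act M n"

abbreviation B :: "nat \<Rightarrow> ('g list \<Rightarrow> 'm) set" where
  "B n \<equiv> cobs G H act M n"

definition cohomologous :: "nat \<Rightarrow> ('g list \<Rightarrow> 'm) \<Rightarrow> ('g list \<Rightarrow> 'm) \<Rightarrow> bool" where
  "cohomologous n f g \<longleftrightarrow> f - g \<in> B n"

definition cls :: "nat \<Rightarrow> ('g list \<Rightarrow> 'm) \<Rightarrow> ('g list \<Rightarrow> 'm) set" where
  "cls n f = {g \<in> C n. g - f \<in> B n}"

lemma zero_C [simp]: "0 \<in> C n"
  using zero_mem additive.zero[OF additive_act] by (simp add: cochains_def)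

lemma map_C:
  assumes "additive \<psi>" "\<And>a. a \<in> M \<Longrightarrow> \<psi> a \<in> M"
    and "\<And>h a. h \<in> H \<Longrightarrow> a \<in> M \<Longrightarrow> act h (\<psi> a) = \<psi> (act h a)"
    and "f \<in> C n"
  shows "(\<lambda>xs. \<psi> (f xs)) \<in> C n"
  using assms by (simp add: cochains_def additive.zero)

lemma add_C: "f \<in> C n \<Longrightarrow> g \<in> C n \<Longrightarrow> f + g \<in> C n"
  by (simp add: cochains_def add_mem additive.add[OF additive_act])

lemma minus_C: "f \<in> C n \<Longrightarrow> - f \<in> C n"
  by (simp add: cochains_def minus_mem additive.minus[OF additive_act])

lemma diff_C: "f \<in> C n \<Longrightarrow> g \<in> C n \<Longrightarrow> f - g \<in> C n"
  using add_C[of f n "- g"] minus_C[of g n] by simp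

lemma sum_C: "(\<And>i. i \<in> A \<Longrightarrow> F i \<in> C n) \<Longrightarrow> sum F A \<in> C n"
  by (induction A rule: infinite_finite_induct) (auto intro: add_C)

lemma sum_mem: "(\<And>i. i \<in> A \<Longrightarrow> F i \<in> M) \<Longrightarrow> sum F A \<in> M"
  by (induction A rule: infinite_finite_induct) (auto intro: zero_mem add_mem)

lemma signed_mem: "a \<in> M \<Longrightarrow> signed i a \<in> M"
  by (simp add: signed_def minus_mem)

lemma cobound_C:
  assumes f: "f \<in> C n"
  shows "cobound G n f \<in> C (Suc n)"
proof (rule cochainsI)
  fix xs assume "xs \<notin> tuples G (Suc (Suc n))"
  then show "cobound G n f xs = 0" by (simp add: cobound_eq)
next
  fix xs assume xs: "xs \<in> tuples G (Suc (Suc n))"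
  have face: "del_at i xs \<in> tuples G (Suc n)" if "i \<le> n + 1" for i
    using del_at_in_tuples[OF xs] that by simp
  show "cobound G n f xs \<in> M"
    using xs face by (simp add: cobound_eq del: sum.atMost_Suc)
      (intro sum_mem signed_mem cochainsD(2)[OF f], simp)
  fix h assume h: "h \<in> H"
  have "map (\<lambda>x. h \<otimes>\<^bsub>G\<^esub> x) xs \<in> tuples G (Suc (Suc n))"
    using map_mult_in_tuples[OF group _ xs] h subset by blast
  then show "cobound G n f (map (\<lambda>x. h \<otimes>\<^bsub>G\<^esub> x) xs) = act h (cobound G n f xs)"
    using xs face h cochainsD(3)[OF f h]
    by (simp add: cobound_eq del_at_map additive.sum[OF additive_act] signed_additive[OF additive_act]
        del: sum.atMost_Suc)
qed

lemma B_cases: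
  assumes "b \<in> B n"
  obtains (zero) "n = 0" "b = 0" | (cobound) m a where "n = Suc m" "a \<in> C m" "b = cobound G m a"
proof (cases n)
  case 0 then show ?thesis using assms that(1) by (simp add: cobs_def)
next
  case (Suc m)
  with assms obtain a where "a \<in> C m" "b = cobound G m a" by (auto simp: cobs_def)
  with Suc that(2) show ?thesis by blast
qed

lemma cobound_B: "f \<in> C n \<Longrightarrow> cobound G n f \<in> B (Suc n)"
  by (simp add: cobs_def)

lemma zero_B [simp]: "0 \<in> B n"
proof (cases n)
  case (Suc m)
  then show ?thesis using cobound_B[OF zero_C, of m] by simp
qed (simp add: cobs_def)

lemma B_subset_C: "b \<in> B n \<Longrightarrow> b \<in> C n"
  by (erule B_cases) (simp_all add: cobound_C)

lemma cobound_eq_0_if_B: "b \<in> B n \<Longrightarrow> cobound G n b = 0"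
  by (erule B_cases) (simp_all add: cobound_cobound)

lemma map_B:
  assumes "additive \<psi>" "\<And>a. a \<in> M \<Longrightarrow> \<psi> a \<in> M"
    and "\<And>h a. h \<in> H \<Longrightarrow> a \<in> M \<Longrightarrow> act h (\<psi> a) = \<psi> (act h a)"
    and "b \<in> B n"
  shows "(\<lambda>xs. \<psi> (b xs)) \<in> B n"
  using assms(4)
proof (cases rule: B_cases)
  case zero
  then have "(\<lambda>xs. \<psi> (b xs)) = 0" using additive.zero[OF assms(1)] by (simp add: fun_eq_iff)
  then show ?thesis by simp
next
  case (cobound m a)
  then have "(\<lambda>xs. \<psi> (a xs)) \<in> C m" by (intro map_C[OF assms(1-3)])
  then have "cobound G m (\<lambda>xs. \<psi> (a xs)) \<in> B n" using cobound cobound_B by simp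
  with cobound show ?thesis by (simp add: cobound_additive[OF assms(1)])
qed

lemma add_B:
  assumes "f \<in> B n" "g \<in> B n"
  shows "f + g \<in> B n"
proof (cases n)
  case (Suc m)
  then obtain a b where "a \<in> C m" "b \<in> C m" "f = cobound G m a" "g = cobound G m b"
    using assms by (auto simp: cobs_def)
  then have "f + g = cobound G m (a + b)" "a + b \<in> C m" by (simp_all add: cobound_add add_C)
  then show ?thesis using Suc by (simp add: cobs_def)
qed (use assms in \<open>simp add: cobs_def\<close>)

lemma minus_B:
  assumes "f \<in> B n"
  shows "- f \<in> B n"
proof (cases n)
  case (Suc m)
  then obtain a where "a \<in> C m" "f = cobound G m a" using assms by (auto simp: cobs_def)
  then have "- f = cobound G m (- a)" "- a \<in> C m" by (simp_all add: cobound_minus minus_C)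
  then show ?thesis using Suc by (simp add: cobs_def)
qed (use assms in \<open>simp add: cobs_def\<close>)

lemma cohomologous_refl: "cohomologous n f f"
  by (simp add: cohomologous_def)

lemma cohomologous_sym: "cohomologous n f g \<Longrightarrow> cohomologous n g f"
  using minus_B[of "f - g" n] by (simp add: cohomologous_def)

lemma cohomologous_trans: "cohomologous n f g \<Longrightarrow> cohomologous n g h \<Longrightarrow> cohomologous n f h"
  using add_B[of "f - g" n "g - h"] by (simp add: cohomologous_def)

lemma cohomologous_add:
  "cohomologous n f g \<Longrightarrow> cohomologous n f' g' \<Longrightarrow> cohomologous n (f + f') (g + g')"
  using add_B[of "f - g" n "f' - g'"] by (simp add: cohomologous_def algebra_simps)

lemma cohomologous_cocycle:
  "cohomologous n f g \<Longrightarrow> cobound G n g = 0 \<Longrightarrow> cobound G n f = 0"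
  using cobound_eq_0_if_B[of "f - g" n] by (simp add: cohomologous_def cobound_diff)

lemma cls_eq: "cohomologous n f f' \<Longrightarrow> cls n f = cls n f'"
proof -
  have sub: "cls n f \<subseteq> cls n f'" if "cohomologous n f f'" for f f'
  proof
    fix g assume "g \<in> cls n f"
    then have "g \<in> C n" "cohomologous n g f" by (simp_all add: cls_def cohomologous_def)
    with that show "g \<in> cls n f'"
      using cohomologous_trans[of n g f f'] by (simp add: cls_def cohomologous_def)
  qed
  assume "cohomologous n f f'"
  then show ?thesis using sub[of f f'] sub[of f' f] cohomologous_sym by blast
qed

lemma rep_cls: "f \<in> C n \<Longrightarrow> rep (cls n f) \<in> C n \<and> cohomologous n (rep (cls n f)) f"
proof -
  assume "f \<in> C n"
  then have "rep (cls n f) \<in> cls n f" by (intro rep_mem[of f]) (simp add: cls_def)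
  then show ?thesis by (simp add: cls_def cohomologous_def)
qed

lemma cocycle_class_rep:
  assumes "X \<in> cls n ` {f \<in> C n. cobound G n f = 0}"
  shows "rep X \<in> C n \<and> cobound G n (rep X) = 0 \<and> X = cls n (rep X)"
proof -
  obtain f where f: "f \<in> C n" "cobound G n f = 0" "X = cls n f" using assms by blast
  then show ?thesis using rep_cls[OF f(1)] cohomologous_cocycle cls_eq by metis
qed

end

section \<open>The Leibniz rule for the cup product of cochains\<close>

lemma take_del_at_le:
  "i \<le> m \<Longrightarrow> m + 2 \<le> length xs \<Longrightarrow> take (m+1) (del_at i xs) = del_at i (take (m+2) xs)"
  by (rule nth_equalityI) (auto simp: length_del_at nth_del_at)

lemma drop_del_at_le: "i \<le> m \<Longrightarrow> m + 2 \<le> length xs \<Longrightarrow> drop m (del_at i xs) = drop (m+1) xs"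
  by (rule nth_equalityI) (auto simp: length_del_at nth_del_at)

lemma take_del_at_gr: "m < i \<Longrightarrow> i < length xs \<Longrightarrow> take (m+1) (del_at i xs) = take (m+1) xs"
  by (rule nth_equalityI) (auto simp: length_del_at nth_del_at)

lemma drop_del_at_gr:
  "m < i \<Longrightarrow> i < length xs \<Longrightarrow> drop m (del_at i xs) = del_at (i - m) (drop m xs)"
  by (rule nth_equalityI) (auto simp: length_del_at nth_del_at)

lemma del_at_last_take: "m + 2 \<le> length xs \<Longrightarrow> del_at (m+1) (take (m+2) xs) = take (m+1) xs"
  by (rule nth_equalityI) (auto simp: length_del_at nth_del_at)

lemma del_at_0_drop: "m < length xs \<Longrightarrow> del_at 0 (drop m xs) = drop (m+1) xs"
  by (simp add: del_at_def)

lemma cupc_cobound_left: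
  assumes mu: "\<And>b. additive (\<lambda>a. mu a b)" and xs: "xs \<in> tuples G (m + n + 2)"
  shows "cupc G mu (Suc m) n (cobound G m f) g xs =
           (\<Sum>i\<le>m. signed i (mu (f (take (m+1) (del_at i xs))) (g (drop m (del_at i xs)))))
         + signed (Suc m) (mu (f (take (m+1) xs)) (g (drop (m+1) xs)))"
proof -
  have len: "length xs = m + n + 2" using xs by (simp add: mem_tuples_iff)
  define b where "b = g (drop (m+1) xs)"
  have "cupc G mu (Suc m) n (cobound G m f) g xs = mu (cobound G m f (take (m+2) xs)) b"
    using xs by (simp add: cupc_def b_def)
  also have "\<dots> = (\<Sum>i\<le>m+1. signed i (mu (f (del_at i (take (m+2) xs))) b))"
    using take_in_tuples[OF xs, of "m+2"]
    by (simp add: cobound_eq additive.sum[OF mu] signed_additive[OF mu] del: sum.atMost_Suc)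
  also have "\<dots> = (\<Sum>i\<le>m. signed i (mu (f (take (m+1) (del_at i xs))) (g (drop m (del_at i xs)))))
         + signed (Suc m) (mu (f (take (m+1) xs)) b)"
  proof -
    have "del_at (Suc m) (take (Suc (Suc m)) xs) = take (Suc m) xs"
      using del_at_last_take[of m xs] len by simp
    moreover have "take (Suc m) (del_at i xs) = del_at i (take (Suc (Suc m)) xs)"
      and "drop m (del_at i xs) = drop (Suc m) xs" if "i \<le> m" for i
      using take_del_at_le[of i m xs] drop_del_at_le[of i m xs] len that by simp_all
    ultimately show ?thesis by (simp add: b_def)
  qed
  finally show ?thesis by (simp add: b_def)
qed

lemma cupc_cobound_right:
  assumes mu: "\<And>a. additive (mu a)" and xs: "xs \<in> tuples G (m + n + 2)"
  shows "cupc G mu m (Suc n) f (cobound G n g) xs =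
           mu (f (take (m+1) xs)) (g (drop (m+1) xs))
         + signed m (\<Sum>i\<in>{m<..m+n+1}. signed i (mu (f (take (m+1) (del_at i xs))) (g (drop m (del_at i xs)))))"
proof -
  have len: "length xs = m + n + 2" using xs by (simp add: mem_tuples_iff)
  define a where "a = f (take (m+1) xs)"
  define t where "t j = signed j (mu a (g (del_at j (drop m xs))))" for j
  have "cupc G mu m (Suc n) f (cobound G n g) xs = mu a (cobound G n g (drop m xs))"
    using xs by (simp add: cupc_def a_def)
  also have "\<dots> = (\<Sum>j\<le>n+1. t j)"
    using drop_in_tuples[OF xs, of m]
    by (simp add: cobound_eq t_def additive.sum[OF mu] signed_additive[OF mu] del: sum.atMost_Suc)
  also have "\<dots> = t 0 + (\<Sum>j\<in>{0<..n+1}. t j)"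
  proof -
    have "{..n+1} = insert 0 {0<..n+1}" by auto
    then show ?thesis by (simp del: sum.atMost_Suc)
  qed
  also have "(\<Sum>j\<in>{0<..n+1}. t j) = (\<Sum>i\<in>{m<..m+n+1}. t (i - m))"
    by (rule sum.reindex_bij_witness[of _ "\<lambda>i. i - m" "\<lambda>j. j + m"]) auto
  also have "\<dots> = signed m (\<Sum>i\<in>{m<..m+n+1}.
      signed i (mu (f (take (m+1) (del_at i xs))) (g (drop m (del_at i xs)))))"
    unfolding signed_sum
  proof (rule sum.cong)
    fix i assume i: "i \<in> {m<..m+n+1}"
    then have "even (i - m) = even (m + i)" by (cases "even m") auto
    then have "t (i - m) = signed (m + i) (mu a (g (del_at (i - m) (drop m xs))))"
      unfolding t_def by (rule signed_parity)
    moreover have "take (m+1) (del_at i xs) = take (m+1) xs"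
      and "drop m (del_at i xs) = del_at (i - m) (drop m xs)"
      using i len take_del_at_gr[of m i xs] drop_del_at_gr[of m i xs] by auto
    ultimately show "t (i - m) = signed m (signed i (mu (f (take (m+1) (del_at i xs))) (g (drop m (del_at i xs)))))"
      by (simp add: a_def signed_signed)
  qed simp
  finally show ?thesis
    using len by (simp add: t_def del_at_0_drop a_def signed_0)
qed

text \<open>The last face of the left factor and the first face of the right factor cancel.\<close>
lemma cobound_cupc:
  assumes "\<And>b. additive (\<lambda>a. mu a b)" and "\<And>a. additive (mu a)"
  shows "cobound G (m + n) (cupc G mu m n f g)
       = cupc G mu (Suc m) n (cobound G m f) g
         + (\<lambda>xs. signed m (cupc G mu m (Suc n) f (cobound G n g) xs))"
proof (rule ext)
  fix xs
  show "cobound G (m + n) (cupc G mu m n f g) xs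
       = (cupc G mu (Suc m) n (cobound G m f) g
          + (\<lambda>xs. signed m (cupc G mu m (Suc n) f (cobound G n g) xs))) xs"
  proof (cases "xs \<in> tuples G (m + n + 2)")
    case False
    then show ?thesis by (simp add: cobound_eq cupc_def del: sum.atMost_Suc)
  next
    case True
    define T where "T i = signed i (mu (f (take (m+1) (del_at i xs))) (g (drop m (del_at i xs))))" for i
    have "cobound G (m + n) (cupc G mu m n f g) xs = (\<Sum>i\<le>m+n+1. T i)"
      using True del_at_in_tuples[of xs G "Suc (m+n)"]
      by (simp add: cobound_eq cupc_def T_def del: sum.atMost_Suc)
    also have "{..m+n+1} = {..m} \<union> {m<..m+n+1}" by auto
    also have "sum T \<dots> = sum T {..m} + sum T {m<..m+n+1}" by (rule sum.union_disjoint) auto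
    finally show ?thesis
      using cupc_cobound_left[OF assms(1) True, where f=f and g=g]
        cupc_cobound_right[OF assms(2) True, where f=f and g=g]
      by (simp add: T_def signed_add signed_signed_cancel signed_Suc)
  qed
qed

lemma additive_cact: "additive (cact G h :: ('g \<Rightarrow> 'r::ab_group_add) \<Rightarrow> _)"
  by unfold_locales (simp add: cact_def fun_eq_iff)

lemmas cact_sum = additive.sum[OF additive_cact]
lemmas cact_zero [simp] = additive.zero[OF additive_cact]

lemma (in group) mult_inv_cancel_left [simp]:
  "x \<in> carrier G \<Longrightarrow> y \<in> carrier G \<Longrightarrow> x \<otimes> (inv x \<otimes> y) = y"
  by (simp add: m_assoc[symmetric])

lemma (in group) inv_mult_cancel_left [simp]:
  "x \<in> carrier G \<Longrightarrow> y \<in> carrier G \<Longrightarrow> inv x \<otimes> (x \<otimes> y) = y"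
  by (simp add: m_assoc[symmetric])

lemma (in group) cact_mult:
  "h \<in> carrier G \<Longrightarrow> h' \<in> carrier G \<Longrightarrow> cact G (h \<otimes> h') a = cact G h (cact G h' a)"
  by (simp add: cact_def fun_eq_iff inv_mult_group m_assoc)

lemma gmult_galg: "gmult G a b \<in> galg G"
  by (simp add: gmult_def galg_def)

lemma additive_gmult_left: "additive (\<lambda>a. gmult G a b)"
  by unfold_locales (simp add: gmult_def fun_eq_iff distrib_right sum.distrib)

lemma additive_gmult_right: "additive (gmult G a)"
  by unfold_locales (simp add: gmult_def fun_eq_iff distrib_left sum.distrib)

lemma gmult_scale_left: "gmult G (\<lambda>y. c * a y) b = (\<lambda>y. c * gmult G a b y)"
  by (simp add: gmult_def fun_eq_iff sum_distrib_left mult.assoc)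

lemma gmult_scale_right: "gmult G a (\<lambda>y. c * b y) = (\<lambda>y. c * gmult G a b y)"
  by (simp add: gmult_def fun_eq_iff sum_distrib_left mult.left_commute)

lemma gmult_of_int:
  "gmult G (\<lambda>y. of_int (a y)) (\<lambda>y. of_int (b y)) = (\<lambda>y. of_int (gmult G a b y) :: 'r::comm_ring_1)"
  by (simp add: gmult_def fun_eq_iff)

lemma gmult_dvd_left: "(\<And>y. (p::int) dvd a y) \<Longrightarrow> p dvd gmult G a b z"
  by (simp add: gmult_def dvd_sum)

lemma gmult_dvd_right: "(\<And>y. (p::int) dvd b y) \<Longrightarrow> p dvd gmult G a b z"
  by (simp add: gmult_def dvd_sum)

text \<open>Conjugation is an algebra automorphism; reindex the convolution by \<open>w = h\<inverse> y h\<close>.\<close>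
lemma (in group) gmult_cact:
  assumes h: "h \<in> carrier G"
  shows "gmult G (cact G h a) (cact G h b) = cact G h (gmult G a b)"
proof (rule ext)
  fix z
  show "gmult G (cact G h a) (cact G h b) z = cact G h (gmult G a b) z"
  proof (cases "z \<in> carrier G")
    case False then show ?thesis by (simp add: gmult_def cact_def)
  next
    case z: True
    have "gmult G (cact G h a) (cact G h b) z
        = (\<Sum>y\<in>carrier G. a (inv h \<otimes> y \<otimes> h) * b (inv h \<otimes> (inv y \<otimes> z) \<otimes> h))"
      using z h by (simp add: gmult_def cact_def)
    also have "\<dots> = (\<Sum>w\<in>carrier G. a w * b (inv w \<otimes> (inv h \<otimes> z \<otimes> h)))"
    proof (rule sum.reindex_bij_witness[of _ "\<lambda>w. h \<otimes> w \<otimes> inv h" "\<lambda>y. inv h \<otimes> y \<otimes> h"])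
      fix y assume y: "y \<in> carrier G"
      show "h \<otimes> (inv h \<otimes> y \<otimes> h) \<otimes> inv h = y" "inv h \<otimes> y \<otimes> h \<in> carrier G"
        using y h by (simp_all add: m_assoc)
      have "inv (inv h \<otimes> y \<otimes> h) \<otimes> (inv h \<otimes> z \<otimes> h) = inv h \<otimes> (inv y \<otimes> z) \<otimes> h"
        using y h z by (simp add: inv_mult_group m_assoc)
      then show "a (inv h \<otimes> y \<otimes> h) * b (inv (inv h \<otimes> y \<otimes> h) \<otimes> (inv h \<otimes> z \<otimes> h)) =
         a (inv h \<otimes> y \<otimes> h) * b (inv h \<otimes> (inv y \<otimes> z) \<otimes> h)" by simp
    next
      fix w assume w: "w \<in> carrier G"
      show "inv h \<otimes> (h \<otimes> w \<otimes> inv h) \<otimes> h = w" "h \<otimes> w \<otimes> inv h \<in> carrier G"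
        using w h by (simp_all add: m_assoc)
    qed
    also have "\<dots> = cact G h (gmult G a b) z"
      using z h by (simp add: gmult_def cact_def)
    finally show ?thesis .
  qed
qed

abbreviation galg_cochains :: "('g,'b) monoid_scheme \<Rightarrow> nat \<Rightarrow> ('g list \<Rightarrow> 'g \<Rightarrow> 'r::comm_ring_1) set" where
  "galg_cochains G n \<equiv> cochains G (carrier G) (cact G) (galg G) n"

abbreviation galg_cobs :: "('g,'b) monoid_scheme \<Rightarrow> nat \<Rightarrow> ('g list \<Rightarrow> 'g \<Rightarrow> 'r::comm_ring_1) set" where
  "galg_cobs G n \<equiv> cobs G (carrier G) (cact G) (galg G) n"

lemma coeff_module_galg:
  "group G \<Longrightarrow> coeff_module G (carrier G) (cact G) (galg G :: ('g \<Rightarrow> 'r::ab_group_add) set)"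
  unfolding coeff_module_def by (auto simp: additive_cact galg_def)

lemma galg_cochains_pointwise:
  "\<phi> 0 = 0 \<Longrightarrow> f \<in> galg_cochains G n \<Longrightarrow> (\<lambda>xs y. \<phi> (f xs y)) \<in> galg_cochains G n"
  by (auto simp: cochains_def galg_def cact_def fun_eq_iff)

lemma galg_cochains_scale: "f \<in> galg_cochains G n \<Longrightarrow> (\<lambda>xs y. c * f xs y) \<in> galg_cochains G n"
  by (rule galg_cochains_pointwise) simp_all

lemma galg_cobs_scale:
  fixes c :: "'r::comm_ring_1"
  assumes "group G" "f \<in> galg_cobs G n"
  shows "(\<lambda>xs y. c * f xs y) \<in> galg_cobs G n"
proof -
  have "additive (\<lambda>a. c * a)" by unfold_locales (simp add: distrib_left)
  then show ?thesis
    by (rule coeff_module.map_B[OF coeff_module_galg[OF assms(1)] additive_pointwise _ _ assms(2)])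
      (auto simp: galg_def cact_def fun_eq_iff)
qed

lemma galg_cochains_cupc:
  "group G \<Longrightarrow> f \<in> galg_cochains G m \<Longrightarrow> g \<in> galg_cochains G n
    \<Longrightarrow> cupc G (gmult G) m n f g \<in> galg_cochains G (m + n)"
  by (rule cupc_cochains) (auto simp: group.gmult_cact gmult_galg)

lemma additive_cupc_left: "additive (\<lambda>f. cupc G (gmult G) m n f g)"
  by unfold_locales (simp add: cupc_def fun_eq_iff additive.add[OF additive_gmult_left])

lemma additive_cupc_right: "additive (cupc G (gmult G) m n f)"
  by unfold_locales (simp add: cupc_def fun_eq_iff additive.add[OF additive_gmult_right])

lemmas cupc_add_left = additive.add[OF additive_cupc_left]
lemmas cupc_add_right = additive.add[OF additive_cupc_right]
lemmas cupc_diff_left = additive.diff[OF additive_cupc_left]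
lemmas cupc_diff_right = additive.diff[OF additive_cupc_right]
lemmas cupc_zero_left = additive.zero[OF additive_cupc_left]
lemmas cupc_zero_right = additive.zero[OF additive_cupc_right]

lemma cupc_scale_left:
  "cupc G (gmult G) m n (\<lambda>xs y. c * f xs y) g = (\<lambda>xs y. c * cupc G (gmult G) m n f g xs y)"
  by (simp add: cupc_def fun_eq_iff gmult_scale_left)

lemma cupc_scale_right:
  "cupc G (gmult G) m n f (\<lambda>xs y. c * g xs y) = (\<lambda>xs y. c * cupc G (gmult G) m n f g xs y)"
  by (simp add: cupc_def fun_eq_iff gmult_scale_right)

lemma cobound_cupc_gmult:
  "cobound G (m + n) (cupc G (gmult G) m n f g)
     = cupc G (gmult G) (Suc m) n (cobound G m f) g
       + (\<lambda>xs. signed m (cupc G (gmult G) m (Suc n) f (cobound G n g) xs))"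
  by (rule cobound_cupc[OF additive_gmult_left additive_gmult_right])

lemma cupc_cocycle:
  "cobound G m f = 0 \<Longrightarrow> cobound G n g = 0 \<Longrightarrow> cobound G (m + n) (cupc G (gmult G) m n f g) = 0"
  by (simp add: cobound_cupc_gmult cupc_zero_left cupc_zero_right zero_fun_def[symmetric])

lemmas galg_cochains_add = coeff_module.add_C[OF coeff_module_galg]
lemmas galg_cochains_diff = coeff_module.diff_C[OF coeff_module_galg]
lemmas galg_cochains_sum = coeff_module.sum_C[OF coeff_module_galg]
lemmas galg_cochains_cobound = coeff_module.cobound_C[OF coeff_module_galg]
lemmas galg_cobs_cobound = coeff_module.cobound_B[OF coeff_module_galg]
lemmas galg_cobs_add = coeff_module.add_B[OF coeff_module_galg]
lemmas galg_cobs_minus = coeff_module.minus_B[OF coeff_module_galg]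
lemmas galg_cobs_subset = coeff_module.B_subset_C[OF coeff_module_galg]
lemmas cobound_galg_cobs = coeff_module.cobound_eq_0_if_B[OF coeff_module_galg]

lemma galg_cobs_cases:
  assumes "group G" "b \<in> galg_cobs G n"
  obtains (zero) "n = 0" "b = 0"
    | (cobound) m a where "n = Suc m" "a \<in> galg_cochains G m" "b = cobound G m a"
  using coeff_module.B_cases[OF coeff_module_galg[OF assms(1)] assms(2)] by blast

lemma galg_cochains_zero [simp]: "0 \<in> galg_cochains G n"
  by (simp add: cochains_def galg_def cact_def zero_fun_def)

lemma galg_cobs_zero [simp]: "group G \<Longrightarrow> 0 \<in> galg_cobs G n"
  by (rule coeff_module.zero_B[OF coeff_module_galg])

lemma galg_cobs_signed: "group G \<Longrightarrow> b \<in> galg_cobs G n \<Longrightarrow> (\<lambda>xs. signed k (b xs)) \<in> galg_cobs G n"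
proof -
  assume "group G" "b \<in> galg_cobs G n"
  moreover have "(\<lambda>xs. - b xs) = - b" by (simp add: fun_eq_iff)
  ultimately show ?thesis using galg_cobs_minus by (cases "even k") (auto simp: signed_def)
qed

section \<open>The Bockstein of \<open>\<bbbF>\<^sub>pG\<close> via integral lifts\<close>

definition all_dvd :: "int \<Rightarrow> ('g list \<Rightarrow> 'g \<Rightarrow> int) \<Rightarrow> bool" where
  "all_dvd p F \<longleftrightarrow> (\<forall>xs y. p dvd F xs y)"

definition cohom_modp ::
  "('g,'b) monoid_scheme \<Rightarrow> int \<Rightarrow> nat \<Rightarrow> ('g list \<Rightarrow> 'g \<Rightarrow> int) \<Rightarrow> ('g list \<Rightarrow> 'g \<Rightarrow> int) \<Rightarrow> bool" where
  "cohom_modp G p n F F' \<longleftrightarrow> (\<exists>b\<in>galg_cobs G n. all_dvd p (F - F' - b))"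

lemma congp_iff_all_dvd: "congp p F b \<longleftrightarrow> all_dvd p (F - b)"
  by (simp add: congp_def all_dvd_def)

lemma all_dvd_zero [simp]: "all_dvd p 0"
  by (simp add: all_dvd_def)

lemma all_dvd_add: "all_dvd p F \<Longrightarrow> all_dvd p F' \<Longrightarrow> all_dvd p (F + F')"
  by (simp add: all_dvd_def)

lemma all_dvd_diff: "all_dvd p F \<Longrightarrow> all_dvd p F' \<Longrightarrow> all_dvd p (F - F')"
  by (simp add: all_dvd_def)

lemma all_dvd_minus: "all_dvd p F \<Longrightarrow> all_dvd p (- F)"
  by (simp add: all_dvd_def)

lemma all_dvd_scale: "all_dvd p F \<Longrightarrow> all_dvd p (\<lambda>xs y. c * F xs y)"
  by (simp add: all_dvd_def)

lemma all_dvd_signed: "all_dvd p F \<Longrightarrow> all_dvd p (\<lambda>xs. signed k (F xs))"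
  by (simp add: all_dvd_def signed_def)

lemma all_dvd_cupc_left: "all_dvd p f \<Longrightarrow> all_dvd p (cupc G (gmult G) m n f g)"
  by (simp add: all_dvd_def cupc_def gmult_dvd_left)

lemma all_dvd_cupc_right: "all_dvd p g \<Longrightarrow> all_dvd p (cupc G (gmult G) m n f g)"
  by (simp add: all_dvd_def cupc_def gmult_dvd_right)

lemma cohom_modp_sym: "group G \<Longrightarrow> cohom_modp G p n F F' \<Longrightarrow> cohom_modp G p n F' F"
proof -
  assume G: "group G" and "cohom_modp G p n F F'"
  then obtain b where b: "b \<in> galg_cobs G n" "all_dvd p (F - F' - b)" by (auto simp: cohom_modp_def)
  have "F' - F - (- b) = - (F - F' - b)" by (simp add: algebra_simps)
  then have "all_dvd p (F' - F - (- b))" using all_dvd_minus[OF b(2)] by metis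
  then show ?thesis using galg_cobs_minus[OF G b(1)] unfolding cohom_modp_def by blast
qed

lemma cohom_modp_trans:
  "group G \<Longrightarrow> cohom_modp G p n F F' \<Longrightarrow> cohom_modp G p n F' F'' \<Longrightarrow> cohom_modp G p n F F''"
proof -
  assume G: "group G" and "cohom_modp G p n F F'" "cohom_modp G p n F' F''"
  then obtain b b' where b: "b \<in> galg_cobs G n" "all_dvd p (F - F' - b)"
    "b' \<in> galg_cobs G n" "all_dvd p (F' - F'' - b')"
    by (auto simp: cohom_modp_def)
  then have "all_dvd p (F - F'' - (b + b'))" using all_dvd_add[OF b(2) b(4)] by (simp add: algebra_simps)
  then show ?thesis using galg_cobs_add[OF G b(1) b(3)] by (auto simp: cohom_modp_def)
qed

lemma cohom_modp_add:
  "group G \<Longrightarrow> cohom_modp G p n F F' \<Longrightarrow> cohom_modp G p n H H' \<Longrightarrow> cohom_modp G p n (F + H) (F' + H')"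
proof -
  assume G: "group G" and "cohom_modp G p n F F'" "cohom_modp G p n H H'"
  then obtain b b' where b: "b \<in> galg_cobs G n" "all_dvd p (F - F' - b)"
    "b' \<in> galg_cobs G n" "all_dvd p (H - H' - b')"
    by (auto simp: cohom_modp_def)
  then have "all_dvd p (F + H - (F' + H') - (b + b'))"
    using all_dvd_add[OF b(2) b(4)] by (simp add: algebra_simps)
  then show ?thesis using galg_cobs_add[OF G b(1) b(3)] by (auto simp: cohom_modp_def)
qed

lemma cohom_modp_scale:
  "group G \<Longrightarrow> cohom_modp G p n F F' \<Longrightarrow> cohom_modp G p n (\<lambda>xs y. c * F xs y) (\<lambda>xs y. c * F' xs y)"
proof -
  assume G: "group G" and "cohom_modp G p n F F'"
  then obtain b where b: "b \<in> galg_cobs G n" "all_dvd p (F - F' - b)" by (auto simp: cohom_modp_def)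
  then have "all_dvd p ((\<lambda>xs y. c * F xs y) - (\<lambda>xs y. c * F' xs y) - (\<lambda>xs y. c * b xs y))"
    using all_dvd_scale[OF b(2), of c] by (simp add: algebra_simps fun_diff_def)
  then show ?thesis using galg_cobs_scale[OF G b(1), of c] by (auto simp: cohom_modp_def)
qed

lemma cohom_modp_add_cobs: "b \<in> galg_cobs G n \<Longrightarrow> cohom_modp G p n (F + b) F"
  by (auto simp: cohom_modp_def intro!: bexI[of _ b])

lemma cohom_modp_if_all_dvd: "group G \<Longrightarrow> all_dvd p (F - F') \<Longrightarrow> cohom_modp G p n F F'"
  by (auto simp: cohom_modp_def intro!: bexI[of _ 0])

lemma clsp_eq: "group G \<Longrightarrow> cohom_modp G p n F F' \<Longrightarrow> clsp G p n F = clsp G p n F'"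
proof -
  assume G: "group G"
  have sub: "clsp G p n F \<subseteq> clsp G p n F'" if "cohom_modp G p n F F'" for F F'
  proof
    fix g assume "g \<in> clsp G p n F"
    then have g: "g \<in> galg_cochains G n" "cohom_modp G p n g F"
      by (auto simp: clsp_def cohom_modp_def congp_iff_all_dvd Cint_def)
    then have "cohom_modp G p n g F'" using cohom_modp_trans[OF G] that by blast
    then show "g \<in> clsp G p n F'" using g(1) by (auto simp: clsp_def cohom_modp_def congp_iff_all_dvd Cint_def)
  qed
  assume "cohom_modp G p n F F'"
  then show ?thesis using sub[of F F'] sub[of F' F] cohom_modp_sym[OF G] by blast
qed

lemma rep_clsp:
  assumes "group G" "F \<in> galg_cochains G n"
  shows "rep (clsp G p n F) \<in> galg_cochains G n \<and> cohom_modp G p n (rep (clsp G p n F)) F"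
proof -
  have "F \<in> clsp G p n F"
    using assms by (auto simp: clsp_def congp_iff_all_dvd Cint_def intro!: bexI[of _ 0])
  then have "rep (clsp G p n F) \<in> clsp G p n F" by (rule rep_mem)
  then show ?thesis by (auto simp: clsp_def cohom_modp_def congp_iff_all_dvd Cint_def)
qed

lemma cobound_eq_bockc: "all_dvd p (cobound G n f) \<Longrightarrow> cobound G n f = (\<lambda>xs y. p * bockc G p n f xs y)"
  by (auto simp: all_dvd_def bockc_def fun_eq_iff)

lemma bockc_galg_cochains: "group G \<Longrightarrow> f \<in> galg_cochains G n \<Longrightarrow> bockc G p n f \<in> galg_cochains G (Suc n)"
  unfolding bockc_def by (rule galg_cochains_pointwise[OF _ galg_cochains_cobound]) simp_all

lemma bockc_cocycle:
  assumes "p \<noteq> 0" "all_dvd p (cobound G n f)"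
  shows "cobound G (Suc n) (bockc G p n f) = 0"
proof -
  have "(\<lambda>xs y. p * cobound G (Suc n) (bockc G p n f) xs y) = cobound G (Suc n) (cobound G n f)"
    by (simp add: cobound_eq_bockc[OF assms(2)] cobound_scale)
  also have "\<dots> = 0" by (rule cobound_cobound)
  finally show ?thesis using assms(1) by (auto simp: fun_eq_iff)
qed

lemma bockc_zero_if_cocycle: "cobound G n f = 0 \<Longrightarrow> bockc G p n f = 0"
  by (simp add: bockc_def fun_eq_iff)

text \<open>If \<open>g = f + \<beta> + p c\<close> with \<open>\<beta>\<close> a coboundary, then \<open>bockc g = bockc f + \<delta>c\<close>.\<close>
lemma bockc_congruent:
  assumes G: "group G" and p: "p \<noteq> 0"
    and f: "f \<in> galg_cochains G n" "all_dvd p (cobound G n f)"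
    and g: "g \<in> galg_cochains G n" and fg: "cohom_modp G p n g f"
  shows "all_dvd p (cobound G n g) \<and> bockc G p n g - bockc G p n f \<in> galg_cobs G (Suc n)"
proof -
  obtain \<beta> where \<beta>: "\<beta> \<in> galg_cobs G n" "all_dvd p (g - f - \<beta>)" using fg by (auto simp: cohom_modp_def)
  define c where "c = (\<lambda>xs y. (g - f - \<beta>) xs y div p)"
  have gf: "g - f - \<beta> = (\<lambda>xs y. p * c xs y)" using \<beta>(2) by (auto simp: all_dvd_def c_def fun_eq_iff)
  have "g - f - \<beta> \<in> galg_cochains G n"
    by (intro galg_cochains_diff G g f galg_cobs_subset \<beta>)
  then have c_mem: "c \<in> galg_cochains G n"
    unfolding c_def by (rule galg_cochains_pointwise[rotated]) simp
  have "cobound G n g = cobound G n f + cobound G n \<beta> + cobound G n (g - f - \<beta>)"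
    by (simp add: cobound_diff)
  also have "\<dots> = (\<lambda>xs y. p * (bockc G p n f xs y + cobound G n c xs y))"
    by (simp add: cobound_galg_cobs[OF G \<beta>(1)] gf cobound_scale cobound_eq_bockc[OF f(2)]
        fun_eq_iff distrib_left)
  finally have eq: "cobound G n g = (\<lambda>xs y. p * (bockc G p n f xs y + cobound G n c xs y))" .
  then have "bockc G p n g = bockc G p n f + cobound G n c"
    using p by (simp add: bockc_def fun_eq_iff)
  with eq show ?thesis using galg_cobs_cobound[OF G c_mem] by (simp add: all_dvd_def)
qed

lemma cohom_modp_bockc:
  assumes "group G" "p \<noteq> 0" "f \<in> galg_cochains G n" "all_dvd p (cobound G n f)"
    and "g \<in> galg_cochains G n" "cohom_modp G p n g f"
  shows "cohom_modp G p (Suc n) (bockc G p n g) (bockc G p n f)"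
  using cohom_modp_add_cobs[OF conjunct2[OF bockc_congruent[OF assms]], of p "bockc G p n f"]
  by simp

lemma Zp_iff: "f \<in> Zp G p n \<longleftrightarrow> f \<in> galg_cochains G n \<and> all_dvd p (cobound G n f)"
  by (simp add: Zp_def Cint_def congp_iff_all_dvd)

lemma Hp_rep:
  assumes G: "group G" and p: "p \<noteq> 0" and X: "X \<in> Hp G p n"
  shows "rep X \<in> galg_cochains G n \<and> all_dvd p (cobound G n (rep X)) \<and> X = clsp G p n (rep X)"
proof -
  obtain f where f: "f \<in> galg_cochains G n" "all_dvd p (cobound G n f)" "X = clsp G p n f"
    using X by (auto simp: Hp_def Zp_iff)
  have r: "rep X \<in> galg_cochains G n" "cohom_modp G p n (rep X) f" using rep_clsp[OF G f(1), of p] f(3) by auto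
  then show ?thesis using bockc_congruent[OF G p f(1,2) r] clsp_eq[OF G r(2)] f(3) by simp
qed

lemma BockG_Hp:
  assumes "group G" "p \<noteq> 0" "X \<in> Hp G p n"
  shows "BockG G p n X \<in> Hp G p (Suc n)"
proof -
  have "bockc G p n (rep X) \<in> Zp G p (Suc n)"
    using Hp_rep[OF assms] bockc_galg_cochains[OF assms(1)] bockc_cocycle[OF assms(2), of G n "rep X"]
    by (simp add: Zp_iff)
  then show ?thesis by (simp add: BockG_def Hp_def)
qed

text \<open>\<open>bockc f\<close> is an integral cocycle, so its own Bockstein vanishes.\<close>
lemma BockG_BockG:
  assumes G: "group G" and p: "p \<noteq> 0" and X: "X \<in> Hp G p n"
  shows "BockG G p (Suc n) (BockG G p n X) = clsp G p (Suc (Suc n)) 0"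
proof -
  define B where "B = bockc G p n (rep X)"
  have B: "B \<in> galg_cochains G (Suc n)" "cobound G (Suc n) B = 0"
    using Hp_rep[OF G p X] bockc_galg_cochains[OF G] bockc_cocycle[OF p] by (auto simp: B_def)
  define g where "g = rep (BockG G p n X)"
  have g: "g \<in> galg_cochains G (Suc n)" "cohom_modp G p (Suc n) g B"
    using rep_clsp[OF G B(1), of p] by (auto simp: g_def BockG_def B_def)
  have "bockc G p (Suc n) g - bockc G p (Suc n) B \<in> galg_cobs G (Suc (Suc n))"
    using bockc_congruent[OF G p B(1) _ g] B(2) by simp
  then have "cohom_modp G p (Suc (Suc n)) (0 + bockc G p (Suc n) g) 0"
    using bockc_zero_if_cocycle[OF B(2)] by (intro cohom_modp_add_cobs) simp
  moreover have "BockG G p (Suc n) (BockG G p n X) = clsp G p (Suc (Suc n)) (bockc G p (Suc n) g)"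
    by (simp add: BockG_def g_def)
  ultimately show ?thesis by (simp add: clsp_eq[OF G])
qed

lemma bockc_cupc:
  assumes p: "p \<noteq> 0" and f: "all_dvd p (cobound G m f)" and g: "all_dvd p (cobound G n g)"
  shows "all_dvd p (cobound G (m+n) (cupc G (gmult G) m n f g))"
    and "bockc G p (m+n) (cupc G (gmult G) m n f g)
       = cupc G (gmult G) (Suc m) n (bockc G p m f) g
         + (\<lambda>xs. signed m (cupc G (gmult G) m (Suc n) f (bockc G p n g) xs))"
proof -
  define R where "R = cupc G (gmult G) (Suc m) n (bockc G p m f) g
    + (\<lambda>xs. signed m (cupc G (gmult G) m (Suc n) f (bockc G p n g) xs))"
  have e: "cobound G (m+n) (cupc G (gmult G) m n f g) = (\<lambda>xs y. p * R xs y)"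
    by (simp add: cobound_cupc_gmult cobound_eq_bockc[OF f] cobound_eq_bockc[OF g]
        cupc_scale_left cupc_scale_right R_def fun_eq_iff signed_def distrib_left)
  then show "all_dvd p (cobound G (m+n) (cupc G (gmult G) m n f g))" by (simp add: all_dvd_def)
  show "bockc G p (m+n) (cupc G (gmult G) m n f g) = R" using p e by (simp add: bockc_def fun_eq_iff)
qed

lemma cupc_cohom_modp_left:
  assumes G: "group G" and FF': "cohom_modp G p m F F'"
    and g: "g \<in> galg_cochains G n" "all_dvd p (cobound G n g)"
  shows "cohom_modp G p (m+n) (cupc G (gmult G) m n F g) (cupc G (gmult G) m n F' g)"
proof -
  obtain \<beta> where \<beta>: "\<beta> \<in> galg_cobs G m" "all_dvd p (F - F' - \<beta>)"
    using FF' by (auto simp: cohom_modp_def)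
  from G \<beta>(1) show ?thesis
  proof (cases rule: galg_cobs_cases)
    case zero
    have "all_dvd p (cupc G (gmult G) m n F g - cupc G (gmult G) m n F' g)"
      using all_dvd_cupc_left[OF \<beta>(2), of G m n g] zero by (simp add: cupc_diff_left cupc_zero_left)
    then show ?thesis by (rule cohom_modp_if_all_dvd[OF G])
  next
    case (cobound m' b)
    define B where "B = cobound G (m'+n) (cupc G (gmult G) m' n b g)"
    have "B \<in> galg_cobs G (m+n)"
      using galg_cobs_cobound[OF G galg_cochains_cupc[OF G cobound(2) g(1)]] cobound by (simp add: B_def)
    moreover have "cupc G (gmult G) m n F g - cupc G (gmult G) m n F' g - B
        = cupc G (gmult G) m n (F - F' - \<beta>) g
          - (\<lambda>xs. signed m' (cupc G (gmult G) m' (Suc n) b (cobound G n g) xs))"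
      using cobound by (simp add: B_def cobound_cupc_gmult cupc_diff_left cupc_add_left algebra_simps)
    moreover have "all_dvd p \<dots>"
      by (intro all_dvd_diff all_dvd_cupc_left[OF \<beta>(2)] all_dvd_signed all_dvd_cupc_right g(2))
    ultimately show ?thesis unfolding cohom_modp_def by metis
  qed
qed

lemma cupc_cohom_modp_right:
  assumes G: "group G" and f: "f \<in> galg_cochains G m" "all_dvd p (cobound G m f)"
    and HH': "cohom_modp G p n H H'"
  shows "cohom_modp G p (m+n) (cupc G (gmult G) m n f H) (cupc G (gmult G) m n f H')"
proof -
  obtain \<beta> where \<beta>: "\<beta> \<in> galg_cobs G n" "all_dvd p (H - H' - \<beta>)"
    using HH' by (auto simp: cohom_modp_def)
  from G \<beta>(1) show ?thesis
  proof (cases rule: galg_cobs_cases)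
    case zero
    have "all_dvd p (cupc G (gmult G) m n f H - cupc G (gmult G) m n f H')"
      using all_dvd_cupc_right[OF \<beta>(2), of G m n f] zero by (simp add: cupc_diff_right cupc_zero_right)
    then show ?thesis by (rule cohom_modp_if_all_dvd[OF G])
  next
    case (cobound n' b)
    define B where "B = (\<lambda>xs. signed m (cobound G (m+n') (cupc G (gmult G) m n' f b) xs))"
    have "B \<in> galg_cobs G (m+n)" unfolding B_def
      using galg_cobs_signed[OF G galg_cobs_cobound[OF G galg_cochains_cupc[OF G f(1) cobound(2)]]] cobound
      by simp
    moreover have "cupc G (gmult G) m n f H - cupc G (gmult G) m n f H' - B
        = cupc G (gmult G) m n f (H - H' - \<beta>)
          - (\<lambda>xs. signed m (cupc G (gmult G) (Suc m) n' (cobound G m f) b xs))"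
      using cobound(1) unfolding cobound(3) by (simp add: B_def cobound_cupc_gmult signed_add signed_signed_cancel cupc_diff_right cupc_add_right
          fun_eq_iff algebra_simps)
    moreover have "all_dvd p \<dots>"
      by (intro all_dvd_diff all_dvd_cupc_right[OF \<beta>(2)] all_dvd_signed all_dvd_cupc_left f(2))
    ultimately show ?thesis unfolding cohom_modp_def by metis
  qed
qed

lemma rep_Cup_p:
  assumes G: "group G" and p: "p \<noteq> 0"
    and f: "f \<in> galg_cochains G m" "all_dvd p (cobound G m f)"
    and g: "g \<in> galg_cochains G n" "all_dvd p (cobound G n g)"
  shows "rep (Cup_p G p m n (clsp G p m f) (clsp G p n g)) \<in> galg_cochains G (m+n)
    \<and> cohom_modp G p (m+n) (rep (Cup_p G p m n (clsp G p m f) (clsp G p n g)))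
        (cupc G (gmult G) m n f g)"
proof -
  define f' where "f' = rep (clsp G p m f)"
  define g' where "g' = rep (clsp G p n g)"
  have f': "f' \<in> galg_cochains G m" "cohom_modp G p m f' f"
    using rep_clsp[OF G f(1)] by (auto simp: f'_def)
  have g': "g' \<in> galg_cochains G n" "cohom_modp G p n g' g"
    using rep_clsp[OF G g(1)] by (auto simp: g'_def)
  have "all_dvd p (cobound G n g')" using bockc_congruent[OF G p g g'] by simp
  then have "cohom_modp G p (m+n) (cupc G (gmult G) m n f' g') (cupc G (gmult G) m n f g')"
    by (rule cupc_cohom_modp_left[OF G f'(2) g'(1)])
  moreover have "cohom_modp G p (m+n) (cupc G (gmult G) m n f g') (cupc G (gmult G) m n f g)"
    by (rule cupc_cohom_modp_right[OF G f g'(2)])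
  moreover have "rep (Cup_p G p m n (clsp G p m f) (clsp G p n g)) \<in> galg_cochains G (m+n)
    \<and> cohom_modp G p (m+n) (rep (Cup_p G p m n (clsp G p m f) (clsp G p n g)))
      (cupc G (gmult G) m n f' g')"
    using rep_clsp[OF G galg_cochains_cupc[OF G f'(1) g'(1)]] by (simp add: Cup_p_def f'_def g'_def)
  ultimately show ?thesis by (blast intro: cohom_modp_trans[OF G])
qed

lemma Add_p_Cup_p_Smul_p:
  assumes G: "group G" and p: "p \<noteq> 0"
    and f: "f \<in> galg_cochains G m" "all_dvd p (cobound G m f)"
    and g: "g \<in> galg_cochains G n" "all_dvd p (cobound G n g)"
    and u: "u \<in> galg_cochains G (Suc m)" "all_dvd p (cobound G (Suc m) u)"
    and v: "v \<in> galg_cochains G (Suc n)" "all_dvd p (cobound G (Suc n) v)"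
  shows "Add_p G p (Suc (m + n)) (Cup_p G p (Suc m) n (clsp G p (Suc m) u) (clsp G p n g))
      (Smul_p G p (Suc (m + n)) c (Cup_p G p m (Suc n) (clsp G p m f) (clsp G p (Suc n) v)))
    = clsp G p (Suc (m + n)) (cupc G (gmult G) (Suc m) n u g + (\<lambda>xs y. c * cupc G (gmult G) m (Suc n) f v xs y))"
proof -
  define C where "C = Cup_p G p m (Suc n) (clsp G p m f) (clsp G p (Suc n) v)"
  have C: "rep C \<in> galg_cochains G (Suc (m + n))"
    "cohom_modp G p (Suc (m + n)) (rep C) (cupc G (gmult G) m (Suc n) f v)"
    using rep_Cup_p[OF G p f v] by (simp_all add: C_def)
  have "cohom_modp G p (Suc (m + n)) (rep (Smul_p G p (Suc (m + n)) c C))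
      (\<lambda>xs y. c * cupc G (gmult G) m (Suc n) f v xs y)"
    using rep_clsp[OF G galg_cochains_scale[OF C(1)], of p c] cohom_modp_scale[OF G C(2)]
    by (auto simp: Smul_p_def intro: cohom_modp_trans[OF G])
  then have "cohom_modp G p (Suc (m + n))
      (rep (Cup_p G p (Suc m) n (clsp G p (Suc m) u) (clsp G p n g)) + rep (Smul_p G p (Suc (m + n)) c C))
      (cupc G (gmult G) (Suc m) n u g + (\<lambda>xs y. c * cupc G (gmult G) m (Suc n) f v xs y))"
    using rep_Cup_p[OF G p u g] by (intro cohom_modp_add[OF G]) simp_all
  then show ?thesis by (simp add: Add_p_def C_def clsp_eq[OF G])
qed

lemma Hp_leibniz:
  assumes G: "group G" and p: "p \<noteq> 0" and X: "X \<in> Hp G p m" and Y: "Y \<in> Hp G p n"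
  shows "BockG G p (m + n) (Cup_p G p m n X Y)
           = Add_p G p (Suc (m + n))
               (Cup_p G p (Suc m) n (BockG G p m X) Y)
               (Smul_p G p (Suc (m + n)) ((-1) ^ m) (Cup_p G p m (Suc n) X (BockG G p n Y)))"
proof -
  define f where "f = rep X"
  define g where "g = rep Y"
  have f: "f \<in> galg_cochains G m" "all_dvd p (cobound G m f)" "X = clsp G p m f"
    using Hp_rep[OF G p X] by (auto simp: f_def)
  have g: "g \<in> galg_cochains G n" "all_dvd p (cobound G n g)" "Y = clsp G p n g"
    using Hp_rep[OF G p Y] by (auto simp: g_def)
  have "BockG G p (m + n) (Cup_p G p m n X Y) = clsp G p (Suc (m + n)) (bockc G p (m+n) (cupc G (gmult G) m n f g))"
    using rep_Cup_p[OF G p f(1,2) g(1,2)]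
    by (simp add: BockG_def clsp_eq[OF G] cohom_modp_bockc[OF G p galg_cochains_cupc[OF G f(1) g(1)]
        bockc_cupc(1)[OF p f(2) g(2)]] flip: f(3) g(3))
  also have "\<dots> = Add_p G p (Suc (m + n))
               (Cup_p G p (Suc m) n (BockG G p m X) Y)
               (Smul_p G p (Suc (m + n)) ((-1) ^ m) (Cup_p G p m (Suc n) X (BockG G p n Y)))"
  proof -
    have "all_dvd p (cobound G (Suc m) (bockc G p m f))" "all_dvd p (cobound G (Suc n) (bockc G p n g))"
      using bockc_cocycle[OF p f(2)] bockc_cocycle[OF p g(2)] by simp_all
    from Add_p_Cup_p_Smul_p[OF G p f(1,2) g(1,2) bockc_galg_cochains[OF G f(1)] this(1)
        bockc_galg_cochains[OF G g(1)] this(2), where c = "(-1) ^ m"]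
    show ?thesis
      by (simp add: bockc_cupc(2)[OF p f(2) g(2)] signed_fun_eq_power BockG_def
          flip: f_def g_def f(3) g(3))
  qed
  finally show ?thesis .
qed

section \<open>\<open>\<bbbF>\<^sub>p\<close>-linear algebra in a field of characteristic \<open>p\<close>\<close>

text \<open>Integer coefficients stand for elements of the prime field \<open>\<bbbF>\<^sub>p\<close>.\<close>
definition zcomb :: "'k::field list \<Rightarrow> (nat \<Rightarrow> int) \<Rightarrow> 'k" where
  "zcomb e d = (\<Sum>j<length e. of_int (d j) * e ! j)"

definition indep_modp :: "nat \<Rightarrow> 'k::field list \<Rightarrow> bool" where
  "indep_modp p e \<longleftrightarrow> (\<forall>d. zcomb e d = 0 \<longrightarrow> (\<forall>j<length e. int p dvd d j))"

definition coord :: "'k::field list \<Rightarrow> 'k \<Rightarrow> nat \<Rightarrow> int" where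
  "coord e v = (if v = 0 then (\<lambda>j. 0) else (SOME d. v = zcomb e d))"

lemma zcomb_snoc: "zcomb (e @ [v]) d = zcomb e d + of_int (d (length e)) * v"
  by (simp add: zcomb_def nth_append)

lemma zcomb_cong: "(\<And>j. j < length e \<Longrightarrow> d j = d' j) \<Longrightarrow> zcomb e d = zcomb e d'"
  by (simp add: zcomb_def)

lemma zcomb_zero [simp]: "zcomb e (\<lambda>j. 0) = 0"
  by (simp add: zcomb_def)

lemma zcomb_diff: "zcomb e d - zcomb e d' = zcomb e (\<lambda>j. d j - d' j)"
  by (simp add: zcomb_def sum_subtractf left_diff_distrib)

lemma zcomb_scale: "of_int c * zcomb e d = zcomb e (\<lambda>j. c * d j)"
  by (simp add: zcomb_def sum_distrib_left mult.assoc)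

lemma of_int_invertible_if_not_dvd:
  assumes "prime p" "CHAR('k::field) = p" "\<not> int p dvd d"
  shows "\<exists>u. (of_int d :: 'k) * of_int u = 1"
proof -
  have "coprime d (int p)"
    using assms(1,3) prime_imp_coprime[of "int p" d] by (simp add: ac_simps)
  then obtain u v where uv: "u * d + v * int p = 1" using bezout_int[of d "int p"] by auto
  have "(of_int (v * int p) :: 'k) = 0"
    by (rule of_int_eq_0_iff_char_dvd[THEN iffD2]) (simp add: assms(2))
  moreover have "(of_int (u * d) :: 'k) + of_int (v * int p) = 1"
    using arg_cong[OF uv, of "of_int :: int \<Rightarrow> 'k"] by (simp only: of_int_add of_int_1)
  ultimately have "(of_int (u * d) :: 'k) = 1" by (metis add.right_neutral)
  then show ?thesis by (auto simp: mult.commute)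
qed

text \<open>Greedy extension: a vector outside the \<open>\<bbbF>\<^sub>p\<close>-span of an independent list stays independent
  when appended, since its coefficient in a relation must vanish mod \<open>p\<close>.\<close>
lemma indep_modp_snoc:
  assumes p: "prime p" and ch: "CHAR('k::field) = p"
    and e: "indep_modp p e" and v: "\<nexists>d. v = zcomb e d"
  shows "indep_modp p (e @ [v :: 'k])"
  unfolding indep_modp_def
proof (intro allI impI)
  fix d j assume d0: "zcomb (e @ [v]) d = 0" and j: "j < length (e @ [v])"
  have d0': "zcomb e d + of_int (d (length e)) * v = 0" using d0 by (simp add: zcomb_snoc)
  have dN: "int p dvd d (length e)"
  proof (rule ccontr)
    assume "\<not> int p dvd d (length e)"
    then obtain u where u: "(of_int (d (length e)) :: 'k) * of_int u = 1"
      using of_int_invertible_if_not_dvd[OF p ch] by blast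
    have "v = of_int u * (of_int (d (length e)) * v)" using u by (simp add: ac_simps)
    also have "\<dots> = of_int u * (- zcomb e d)" using minus_unique[OF d0'] by simp
    also have "\<dots> = zcomb e (\<lambda>j. (- u) * d j)" using zcomb_scale[of "- u" e d] by simp
    finally show False using v by blast
  qed
  then have "(of_int (d (length e)) :: 'k) = 0" using ch by (simp add: of_int_eq_0_iff_char_dvd)
  then have "zcomb e d = 0" using d0' by simp
  then have "\<forall>j<length e. int p dvd d j" using e by (simp add: indep_modp_def)
  then show "int p dvd d j" using j dN by (auto simp: less_Suc_eq)
qed

lemma exists_indep_modp_spanning:
  assumes fin: "finite S" and p: "prime p" and ch: "CHAR('k::field) = p"
  shows "\<exists>e :: 'k list. indep_modp p e \<and> (\<forall>v\<in>S. \<exists>d. v = zcomb e d)"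
  using fin
proof (induction S rule: finite_induct)
  case empty
  have "indep_modp p ([] :: 'k list)" by (simp add: indep_modp_def)
  then show ?case by blast
next
  case (insert v S)
  then obtain e :: "'k list" where e: "indep_modp p e" "\<forall>w\<in>S. \<exists>d. w = zcomb e d" by blast
  show ?case
  proof (cases "\<exists>d. v = zcomb e d")
    case True then show ?thesis using e by blast
  next
    case False
    have "\<exists>d. w = zcomb (e @ [v]) d" if "w \<in> insert v S" for w
    proof (cases "w = v")
      case True
      then have "w = zcomb (e @ [v]) (\<lambda>j. if j = length e then 1 else 0)"
        by (simp add: zcomb_snoc zcomb_def)
      then show ?thesis by blast
    next
      case False
      then have "w \<in> S" using that by simp
      then obtain d where d: "w = zcomb e d" using e(2) by blast
      have "zcomb (e @ [v]) (d(length e := 0)) = zcomb e d"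
        by (simp add: zcomb_snoc) (rule zcomb_cong, simp)
      then show ?thesis using d by metis
    qed
    then show ?thesis using indep_modp_snoc[OF p ch e(1) False] by blast
  qed
qed

lemma coord_zero [simp]: "coord e 0 = (\<lambda>j. 0)"
  by (simp add: coord_def)

lemma zcomb_coord: "\<exists>d. v = zcomb e d \<Longrightarrow> v = zcomb e (coord e v)"
  unfolding coord_def using someI_ex[of "\<lambda>d. v = zcomb e d"] by auto

lemma indep_modp_dvd:
  assumes "indep_modp p e" "zcomb e d = zcomb e d'" "j < length e"
  shows "int p dvd d j - d' j"
proof -
  have "zcomb e (\<lambda>j. d j - d' j) = 0" using assms(2) zcomb_diff[of e d d'] by simp
  then show ?thesis using assms(1,3) by (auto simp: indep_modp_def)
qed

lemma sum_of_int_mult_zcomb: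
  fixes c :: "nat \<Rightarrow> 'k::field"
  assumes "\<And>j. j < l \<Longrightarrow> c j = zcomb e (a j)"
  shows "(\<Sum>j<l. c j * of_int (F j)) = zcomb e (\<lambda>i. \<Sum>j<l. a j i * F j)"
proof -
  have "(\<Sum>j<l. c j * of_int (F j)) = (\<Sum>j<l. \<Sum>i<length e. of_int (a j i) * e ! i * of_int (F j))"
    using assms by (simp add: zcomb_def sum_distrib_right)
  also have "\<dots> = (\<Sum>i<length e. \<Sum>j<l. of_int (a j i) * e ! i * of_int (F j))"
    by (rule sum.swap)
  also have "\<dots> = zcomb e (\<lambda>i. \<Sum>j<l. a j i * F j)"
    unfolding zcomb_def by (simp add: sum_distrib_left of_int_sum mult_ac)
  finally show ?thesis .
qed

definition kcomb_galg :: "('k::field \<times> ('g list \<Rightarrow> 'g \<Rightarrow> int)) list \<Rightarrow> 'g list \<Rightarrow> 'g \<Rightarrow> 'k" where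
  "kcomb_galg L = (\<lambda>xs y. \<Sum>j<length L. fst (L ! j) * of_int (snd (L ! j) xs y))"

definition modp_cocycles ::
  "('g,'b) monoid_scheme \<Rightarrow> int \<Rightarrow> nat \<Rightarrow> ('k \<times> ('g list \<Rightarrow> 'g \<Rightarrow> int)) list \<Rightarrow> bool" where
  "modp_cocycles G p n L \<longleftrightarrow> (\<forall>x\<in>set L. snd x \<in> galg_cochains G n \<and> all_dvd p (cobound G n (snd x)))"

definition bock_list ::
  "('g,'b) monoid_scheme \<Rightarrow> int \<Rightarrow> nat \<Rightarrow> ('k \<times> ('g list \<Rightarrow> 'g \<Rightarrow> int)) list \<Rightarrow> ('k \<times> ('g list \<Rightarrow> 'g \<Rightarrow> int)) list" where
  "bock_list G p n L = map (\<lambda>(c, \<phi>). (c, bockc G p n \<phi>)) L"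

definition coord_list :: "'k::field list \<Rightarrow> ('g list \<Rightarrow> 'g \<Rightarrow> 'k) \<Rightarrow> ('k \<times> ('g list \<Rightarrow> 'g \<Rightarrow> int)) list" where
  "coord_list e f = map (\<lambda>i. (e ! i, \<lambda>xs y. coord e (f xs y) i)) [0..<length e]"

lemma kcomb_galg_eq_sum: "kcomb_galg L = (\<Sum>j<length L. (\<lambda>xs y. fst (L ! j) * of_int (snd (L ! j) xs y)))"
  by (simp add: kcomb_galg_def fun_eq_iff sum_fun_apply)

lemma kcomb_galg_mem:
  assumes "\<And>x. x \<in> set L \<Longrightarrow> snd x \<in> galg_cochains G n" "group G"
  shows "kcomb_galg L \<in> galg_cochains G n"
  unfolding kcomb_galg_eq_sum
proof (rule galg_cochains_sum[OF assms(2)])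
  fix j assume "j \<in> {..<length L}"
  then have "(\<lambda>xs y. (of_int (snd (L ! j) xs y) :: 'a)) \<in> galg_cochains G n"
    using assms(1) by (intro galg_cochains_pointwise[where \<phi>=of_int]) auto
  then show "(\<lambda>xs y. fst (L ! j) * of_int (snd (L ! j) xs y)) \<in> galg_cochains G n"
    by (rule galg_cochains_scale)
qed

lemma cobound_kcomb_galg: "cobound G n (kcomb_galg L) = kcomb_galg (map (\<lambda>(c, \<phi>). (c, cobound G n \<phi>)) L)"
proof -
  have e: "cobound G n (\<lambda>xs y. c * (of_int (\<phi> xs y) :: 'k::field)) = (\<lambda>xs y. c * of_int (cobound G n \<phi> xs y))"
    for c \<phi>
  proof -
    have "cobound G n (\<lambda>xs y. c * (\<lambda>xs y. (of_int (\<phi> xs y) :: 'k)) xs y)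
        = (\<lambda>xs y. c * cobound G n (\<lambda>xs y. (of_int (\<phi> xs y) :: 'k)) xs y)"
      by (rule cobound_scale)
    then show ?thesis by (simp add: cobound_of_int)
  qed
  show ?thesis by (simp add: kcomb_galg_eq_sum cobound_sum e case_prod_beta)
qed

lemma kcomb_galg_append: "kcomb_galg (L @ L') = kcomb_galg L + kcomb_galg L'"
proof -
  have split: "(\<Sum>j<a + b. F j) = (\<Sum>j<a. F j) + (\<Sum>j<b. F (a + j))"
    for a b :: nat and F :: "nat \<Rightarrow> 'x::comm_monoid_add"
    by (induction b) (simp_all add: add.assoc)
  show ?thesis by (simp add: kcomb_galg_def fun_eq_iff nth_append split)
qed

lemma kcomb_galg_scale: "kcomb_galg (map (\<lambda>(c, \<phi>). (a * c, \<phi>)) L) = (\<lambda>xs y. a * kcomb_galg L xs y)"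
  by (simp add: kcomb_galg_def fun_eq_iff sum_distrib_left case_prod_beta mult.assoc)

lemma kcomb_galg_uminus: "kcomb_galg (map (\<lambda>(c, \<phi>). (- c, \<phi>)) L) = - kcomb_galg L"
  by (simp add: kcomb_galg_def fun_eq_iff case_prod_beta sum_negf)

lemma kcomb_galg_coords:
  "kcomb_galg (map (\<lambda>i. (e ! i, F i)) [0..<length e]) xs y = zcomb e (\<lambda>i. F i xs y)"
  by (simp add: kcomb_galg_def zcomb_def mult.commute)

lemma kcomb_galg_regroup:
  assumes "\<And>j. j < length L \<Longrightarrow> fst (L ! j) = zcomb e (a j)"
  shows "kcomb_galg L xs y = zcomb e (\<lambda>i. \<Sum>j<length L. a j i * snd (L ! j) xs y)"
  unfolding kcomb_galg_def by (rule sum_of_int_mult_zcomb) (rule assms)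

lemma kcomb_galg_coord_list:
  "(\<And>xs y. \<exists>d. f xs y = zcomb e d) \<Longrightarrow> kcomb_galg (coord_list e f) = f"
  by (simp add: coord_list_def fun_eq_iff kcomb_galg_coords zcomb_coord[symmetric])

lemma bock_list_append: "bock_list G p n (L @ L') = bock_list G p n L @ bock_list G p n L'"
  by (simp add: bock_list_def)

lemma bock_list_scale:
  "bock_list G p n (map (\<lambda>(c, \<phi>). (a * c, \<phi>)) L) = map (\<lambda>(c, \<phi>). (a * c, \<phi>)) (bock_list G p n L)"
  by (simp add: bock_list_def case_prod_beta)

lemma bock_list_uminus:
  "bock_list G p n (map (\<lambda>(c, \<phi>). (- c, \<phi>)) L) = map (\<lambda>(c, \<phi>). (- c, \<phi>)) (bock_list G p n L)"
  by (simp add: bock_list_def case_prod_beta)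

lemma kcomb_galg_bock_list:
  "kcomb_galg (bock_list G p n L) = (\<lambda>xs y. \<Sum>j<length L. fst (L ! j) * of_int (bockc G p n (snd (L ! j)) xs y))"
  by (simp add: kcomb_galg_def bock_list_def case_prod_beta)

lemma modp_cocycles_append:
  "modp_cocycles G p n L \<Longrightarrow> modp_cocycles G p n L' \<Longrightarrow> modp_cocycles G p n (L @ L')"
  by (auto simp: modp_cocycles_def)

lemma modp_cocycles_scale: "modp_cocycles G p n L \<Longrightarrow> modp_cocycles G p n (map (\<lambda>(c, \<phi>). (a * c, \<phi>)) L)"
  by (auto simp: modp_cocycles_def)

lemma modp_cocycles_uminus: "modp_cocycles G p n L \<Longrightarrow> modp_cocycles G p n (map (\<lambda>(c, \<phi>). (- c, \<phi>)) L)"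
  by (auto simp: modp_cocycles_def)

lemma modp_cocycles_bock_list:
  assumes "group G" "p \<noteq> 0" "modp_cocycles G p n L"
  shows "modp_cocycles G p (Suc n) (bock_list G p n L)"
  unfolding modp_cocycles_def bock_list_def
proof (clarsimp)
  fix c \<phi> assume "(c, \<phi>) \<in> set L"
  then have "\<phi> \<in> galg_cochains G n" "all_dvd p (cobound G n \<phi>)"
    using assms(3) by (auto simp: modp_cocycles_def)
  moreover from this have "cobound G (Suc n) (bockc G p n \<phi>) = 0"
    by (intro bockc_cocycle[OF assms(2)]) simp
  ultimately show "bockc G p n \<phi> \<in> galg_cochains G (Suc n) \<and> all_dvd p (cobound G (Suc n) (bockc G p n \<phi>))"
    using bockc_galg_cochains[OF assms(1)] by simp
qed

lemma kcomb_galg_bock_list_mem: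
  assumes "group G" "p \<noteq> 0" "modp_cocycles G p n L"
  shows "kcomb_galg (bock_list G p n L) \<in> galg_cochains G (Suc n)"
  using modp_cocycles_bock_list[OF assms] assms(1)
  by (intro kcomb_galg_mem) (auto simp: modp_cocycles_def)

lemma cobound_kcomb_galg_bock_list:
  assumes "p \<noteq> 0" "modp_cocycles G p n L"
  shows "cobound G (Suc n) (kcomb_galg (bock_list G p n L)) = 0"
proof -
  have "cobound G (Suc n) (bockc G p n (snd (L ! j))) = 0" if "j < length L" for j
    using assms(2) that by (intro bockc_cocycle[OF assms(1)]) (auto simp: modp_cocycles_def)
  then show ?thesis
    unfolding cobound_kcomb_galg
    by (auto simp: bock_list_def kcomb_galg_def fun_eq_iff case_prod_beta intro!: sum.neutral)
qed

lemma exists_indep_modp_spanning_values: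
  assumes G: "finite (carrier G)" and f: "f \<in> galg_cochains G n" and V: "finite V"
    and p: "prime p" and ch: "CHAR('k::field) = p"
  shows "\<exists>e::'k list. indep_modp p e \<and> (\<forall>v\<in>V. \<exists>d. v = zcomb e d) \<and> (\<forall>xs y. \<exists>d. f xs y = zcomb e d)"
proof -
  define S where "S = V \<union> (\<lambda>(xs, y). f xs y) ` (tuples G (Suc n) \<times> carrier G)"
  have "finite S" using V G finite_tuples[OF G] by (simp add: S_def)
  then obtain e :: "'k list" where e: "indep_modp p e" "\<forall>v\<in>S. \<exists>d. v = zcomb e d"
    using exists_indep_modp_spanning[OF _ p ch] by blast
  have "\<exists>d. f xs y = zcomb e d" for xs y
  proof (cases "xs \<in> tuples G (Suc n) \<and> y \<in> carrier G")
    case True then show ?thesis using e(2) by (auto simp: S_def)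
  next
    case False
    then have "f xs y = 0"
      using cochainsD(1,2)[OF f] by (cases "xs \<in> tuples G (Suc n)") (auto simp: galg_def)
    then show ?thesis by (metis zcomb_zero)
  qed
  then show ?thesis using e by (auto simp: S_def)
qed

text \<open>Expanding a \<open>kG\<close>-cocycle along an \<open>\<bbbF>\<^sub>p\<close>-independent list containing its values, the
  coboundary of each coordinate vanishes modulo \<open>p\<close>.\<close>
lemma exists_modp_cocycles_decomposition:
  assumes G: "group G" "finite (carrier G)" and f: "f \<in> galg_cochains G n" "cobound G n f = 0"
    and p: "prime p" and ch: "CHAR('k::field) = p"
  shows "\<exists>L. modp_cocycles G (int p) n L \<and> kcomb_galg L = (f :: 'g list \<Rightarrow> 'g \<Rightarrow> 'k)"
proof -
  obtain e :: "'k list" where e: "indep_modp p e" "\<forall>xs y. \<exists>d. f xs y = zcomb e d"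
    using exists_indep_modp_spanning_values[OF G(2) f(1) finite.emptyI p ch] by blast
  define \<phi> where "\<phi> i = (\<lambda>xs y. coord e (f xs y) i)" for i
  have L: "coord_list e f = map (\<lambda>i. (e ! i, \<phi> i)) [0..<length e]"
    by (simp add: coord_list_def \<phi>_def)
  have kL: "kcomb_galg (coord_list e f) = f" by (rule kcomb_galg_coord_list) (use e in auto)
  have "all_dvd (int p) (cobound G n (\<phi> i))" if i: "i < length e" for i
    unfolding all_dvd_def
  proof (intro allI)
    fix xs y
    have "zcomb e (\<lambda>i. cobound G n (\<phi> i) xs y) = cobound G n (kcomb_galg (coord_list e f)) xs y"
      by (simp add: L cobound_kcomb_galg comp_def kcomb_galg_coords)
    also have "\<dots> = zcomb e (\<lambda>i. 0)" using kL f(2) by simp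
    finally show "int p dvd cobound G n (\<phi> i) xs y"
      using indep_modp_dvd[OF e(1) _ i, of "\<lambda>i. cobound G n (\<phi> i) xs y" "\<lambda>i. 0"] by simp
  qed
  moreover have "\<phi> i \<in> galg_cochains G n" for i
    unfolding \<phi>_def by (rule galg_cochains_pointwise[OF _ f(1)]) simp
  ultimately have "modp_cocycles G (int p) n (coord_list e f)"
    by (auto simp: modp_cocycles_def L)
  with kL show ?thesis by blast
qed

lemma bockc_lincomb:
  assumes p: "p \<noteq> 0" and \<phi>: "\<And>j. j < l \<Longrightarrow> all_dvd p (cobound G n (\<phi> j))"
  shows "bockc G p n (\<lambda>xs y. \<Sum>j<l. a j * \<phi> j xs y) = (\<lambda>xs y. \<Sum>j<l. a j * bockc G p n (\<phi> j) xs y)"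
proof -
  have "(\<lambda>xs y. \<Sum>j<l. a j * \<phi> j xs y) = (\<Sum>j<l. (\<lambda>xs y. a j * \<phi> j xs y))"
    by (simp add: fun_eq_iff sum_fun_apply)
  then have "cobound G n (\<lambda>xs y. \<Sum>j<l. a j * \<phi> j xs y)
      = (\<Sum>j<l. (\<lambda>xs y. a j * cobound G n (\<phi> j) xs y))"
    by (simp add: cobound_sum cobound_scale)
  also have "\<dots> = (\<lambda>xs y. p * (\<Sum>j<l. a j * bockc G p n (\<phi> j) xs y))"
    using cobound_eq_bockc[OF \<phi>]
    by (simp add: fun_eq_iff sum_fun_apply sum_distrib_left ac_simps)
  finally show ?thesis using p by (simp add: bockc_def fun_eq_iff)
qed

lemma bockc_eq_cobound_if_cohom_modp_zero:
  assumes G: "group G" and p: "p \<noteq> 0" and \<Psi>: "\<Psi> \<in> galg_cochains G n" "cohom_modp G p n \<Psi> 0"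
  shows "\<exists>\<gamma>\<in>galg_cochains G n. bockc G p n \<Psi> = cobound G n \<gamma>"
proof -
  have "bockc G p n \<Psi> - bockc G p n 0 \<in> galg_cobs G (Suc n)"
    using bockc_congruent[OF G p galg_cochains_zero _ \<Psi>] by (simp add: all_dvd_def)
  then show ?thesis by (auto simp: cobs_def bockc_zero_if_cocycle)
qed

lemma cobound_zcomb_coords:
  fixes b :: "'g list \<Rightarrow> 'g \<Rightarrow> 'k::field"
  assumes "\<And>xs y. \<exists>d. b xs y = zcomb e d"
  shows "cobound G m b xs y = zcomb e (\<lambda>i. cobound G m (\<lambda>xs y. coord e (b xs y) i) xs y)"
proof -
  have "cobound G m b = cobound G m (kcomb_galg (coord_list e b))"
    using kcomb_galg_coord_list[of b e] assms by simp
  then show ?thesis by (simp add: cobound_kcomb_galg coord_list_def comp_def kcomb_galg_coords)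
qed

text \<open>Expand the values of a primitive along an \<open>\<bbbF>\<^sub>p\<close>-independent list and take coboundaries
  coordinatewise.\<close>
lemma galg_cobs_integral_coords:
  fixes F :: "'g list \<Rightarrow> 'g \<Rightarrow> 'k::field"
  assumes G: "group G" "finite (carrier G)" and p: "prime p" and ch: "CHAR('k) = p"
    and F: "F \<in> galg_cobs G n" and V: "finite V"
  obtains e \<beta> where "indep_modp p e" "\<forall>v\<in>V. \<exists>d. v = zcomb e d" "\<And>i. \<beta> i \<in> galg_cobs G n"
    "\<And>xs y. F xs y = zcomb e (\<lambda>i. \<beta> i xs y)"
  using G(1) F
proof (cases rule: galg_cobs_cases)
  case zero
  obtain e :: "'k list" where "indep_modp p e" "\<forall>v\<in>V. \<exists>d. v = zcomb e d"
    using exists_indep_modp_spanning[OF V p ch] by blast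
  with zero show ?thesis using that[of e "\<lambda>i. 0"] G(1) by simp
next
  case (cobound m b)
  obtain e :: "'k list" where e: "indep_modp p e" "\<forall>v\<in>V. \<exists>d. v = zcomb e d"
    "\<forall>xs y. \<exists>d. b xs y = zcomb e d"
    using exists_indep_modp_spanning_values[OF G(2) cobound(2) V p ch] by blast
  show ?thesis
  proof (rule that[OF e(1,2)])
    show "cobound G m (\<lambda>xs y. coord e (b xs y) i) \<in> galg_cobs G n" for i
      using galg_cobs_cobound[OF G(1) galg_cochains_pointwise[OF _ cobound(2)], of "\<lambda>a. coord e a i"]
        cobound(1) by simp
    show "F xs y = zcomb e (\<lambda>i. cobound G m (\<lambda>xs y. coord e (b xs y) i) xs y)" for xs y
      using cobound_zcomb_coords[of b e G m xs y] e(3) cobound(3) by simp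
  qed
qed

text \<open>If \<open>\<Sum> c\<^sub>j \<phi>\<^sub>j\<close> is a coboundary, expand the \<open>c\<^sub>j\<close> along an \<open>\<bbbF>\<^sub>p\<close>-independent list on
  which the coboundary has integral coordinates \<open>\<beta>\<^sub>i\<close>. Coordinatewise \<open>\<Sum>\<^sub>j a\<^sub>j\<^sub>i \<phi>\<^sub>j \<equiv> \<beta>\<^sub>i\<close>
  modulo \<open>p\<close>, so the Bockstein of each coordinate is a coboundary.\<close>
lemma kcomb_galg_bock_list_cobs:
  fixes L :: "('k::field \<times> ('g list \<Rightarrow> 'g \<Rightarrow> int)) list"
  assumes G: "group G" "finite (carrier G)" and p: "prime p" and ch: "CHAR('k) = p"
    and L: "modp_cocycles G (int p) n L" and K: "kcomb_galg L \<in> galg_cobs G n"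
  shows "kcomb_galg (bock_list G (int p) n L) \<in> galg_cobs G (Suc n)"
proof -
  have p0: "int p \<noteq> 0" using p by (auto simp: prime_gt_0_nat)
  obtain e \<beta> where e: "indep_modp p e" "\<forall>v\<in>fst ` set L. \<exists>d. v = zcomb e d"
    and \<beta>: "\<And>i. \<beta> i \<in> galg_cobs G n" "\<And>xs y. kcomb_galg L xs y = zcomb e (\<lambda>i. \<beta> i xs y)"
    by (rule galg_cobs_integral_coords[OF G p ch K finite_imageI[OF finite_set]]) blast
  define l where "l = length L"
  define \<phi> where "\<phi> j = snd (L ! j)" for j
  define a where "a j = coord e (fst (L ! j))" for j
  have ca: "fst (L ! j) = zcomb e (a j)" if "j < l" for j
    using zcomb_coord[of "fst (L ! j)" e] e(2) that by (auto simp: a_def l_def)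
  have \<phi>: "\<phi> j \<in> galg_cochains G n" "all_dvd (int p) (cobound G n (\<phi> j))" if "j < l" for j
    using L that by (auto simp: modp_cocycles_def \<phi>_def l_def)
  define \<Psi> where "\<Psi> i = (\<lambda>xs y. \<Sum>j<l. a j i * \<phi> j xs y)" for i
  have \<Psi>_mem: "\<Psi> i \<in> galg_cochains G n" for i
  proof -
    have "\<Psi> i = (\<Sum>j<l. (\<lambda>xs y. a j i * \<phi> j xs y))" by (simp add: \<Psi>_def fun_eq_iff sum_fun_apply)
    then show ?thesis by (auto intro: galg_cochains_sum[OF G(1)] galg_cochains_scale \<phi>)
  qed
  have "zcomb e (\<lambda>i. \<Psi> i xs y) = zcomb e (\<lambda>i. \<beta> i xs y)" for xs y
    unfolding \<beta>(2)[symmetric] \<Psi>_def \<phi>_def l_def by (rule kcomb_galg_regroup[symmetric]) (simp add: ca l_def)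
  then have "cohom_modp G (int p) n (\<Psi> i) 0" if "i < length e" for i
    using \<beta>(1)[of i] indep_modp_dvd[OF e(1) _ that]
    by (auto simp: cohom_modp_def all_dvd_def intro!: bexI[of _ "\<beta> i"])
  then obtain \<gamma> where \<gamma>: "\<And>i. i < length e \<Longrightarrow> \<gamma> i \<in> galg_cochains G n"
    "\<And>i. i < length e \<Longrightarrow> bockc G (int p) n (\<Psi> i) = cobound G n (\<gamma> i)"
    using bockc_eq_cobound_if_cohom_modp_zero[OF G(1) p0 \<Psi>_mem] by metis
  define M where "M = map (\<lambda>i. (e ! i, \<gamma> i)) [0..<length e]"
  have "kcomb_galg (bock_list G (int p) n L) xs y = cobound G n (kcomb_galg M) xs y" for xs y
  proof -
    have "kcomb_galg (bock_list G (int p) n L) xs y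
        = zcomb e (\<lambda>i. \<Sum>j<l. a j i * bockc G (int p) n (\<phi> j) xs y)"
      unfolding kcomb_galg_bock_list \<phi>_def l_def by (rule sum_of_int_mult_zcomb) (simp add: ca l_def)
    also have "\<dots> = zcomb e (\<lambda>i. cobound G n (\<gamma> i) xs y)"
      using \<gamma>(2) by (intro zcomb_cong) (simp add: \<Psi>_def bockc_lincomb[OF p0 \<phi>(2)] fun_eq_iff)
    also have "\<dots> = cobound G n (kcomb_galg M) xs y"
      by (simp add: cobound_kcomb_galg M_def comp_def kcomb_galg_coords)
    finally show ?thesis .
  qed
  moreover have "kcomb_galg M \<in> galg_cochains G n"
    using \<gamma>(1) G(1) by (intro kcomb_galg_mem) (auto simp: M_def)
  ultimately show ?thesis using galg_cobs_cobound[OF G(1)] by (metis ext)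
qed

lemma kcomb_galg_bock_list_cohomologous:
  fixes L L' :: "('k::field \<times> ('g list \<Rightarrow> 'g \<Rightarrow> int)) list"
  assumes G: "group G" "finite (carrier G)" and p: "prime p" and ch: "CHAR('k) = p"
    and L: "modp_cocycles G (int p) n L" and L': "modp_cocycles G (int p) n L'"
    and K: "kcomb_galg L - kcomb_galg L' \<in> galg_cobs G n"
  shows "kcomb_galg (bock_list G (int p) n L) - kcomb_galg (bock_list G (int p) n L') \<in> galg_cobs G (Suc n)"
proof -
  define M where "M = L @ map (\<lambda>(c, \<phi>). (- c, \<phi>)) L'"
  have "modp_cocycles G (int p) n M"
    unfolding M_def by (intro modp_cocycles_append modp_cocycles_uminus L L')
  moreover have "kcomb_galg M = kcomb_galg L - kcomb_galg L'"
    by (simp add: M_def kcomb_galg_append kcomb_galg_uminus)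
  ultimately have "kcomb_galg (bock_list G (int p) n M) \<in> galg_cobs G (Suc n)"
    using kcomb_galg_bock_list_cobs[OF G p ch] K by simp
  then show ?thesis
    by (simp add: M_def bock_list_append bock_list_uminus kcomb_galg_append kcomb_galg_uminus)
qed

abbreviation galg_cohomologous ::
  "('g,'b) monoid_scheme \<Rightarrow> nat \<Rightarrow> ('g list \<Rightarrow> 'g \<Rightarrow> 'r::comm_ring_1) \<Rightarrow> ('g list \<Rightarrow> 'g \<Rightarrow> 'r) \<Rightarrow> bool" where
  "galg_cohomologous G \<equiv> coeff_module.cohomologous G (carrier G) (cact G) (galg G)"

lemmas galg_cohomologous_refl = coeff_module.cohomologous_refl[OF coeff_module_galg]
lemmas galg_cohomologous_sym = coeff_module.cohomologous_sym[OF coeff_module_galg]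
lemmas galg_cohomologous_trans = coeff_module.cohomologous_trans[OF coeff_module_galg]
lemmas galg_cohomologous_add = coeff_module.cohomologous_add[OF coeff_module_galg]
lemmas galg_cohomologous_cocycle = coeff_module.cohomologous_cocycle[OF coeff_module_galg]

lemma galg_cohomologous_iff: "group G \<Longrightarrow> galg_cohomologous G n f g \<longleftrightarrow> f - g \<in> galg_cobs G n"
  by (simp add: coeff_module.cohomologous_def[OF coeff_module_galg])

lemma clsk_eq_cls: "group G \<Longrightarrow> clsk G n = coeff_module.cls G (carrier G) (cact G) (galg G) n"
  by (simp add: fun_eq_iff clsk_def Ck_def coeff_module.cls_def[OF coeff_module_galg])

lemma clsk_eq: "group G \<Longrightarrow> galg_cohomologous G n f f' \<Longrightarrow> clsk G n f = clsk G n f'"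
  by (simp add: clsk_eq_cls coeff_module.cls_eq[OF coeff_module_galg])

lemma rep_clsk:
  "group G \<Longrightarrow> f \<in> galg_cochains G n
    \<Longrightarrow> rep (clsk G n f) \<in> galg_cochains G n \<and> galg_cohomologous G n (rep (clsk G n f)) f"
  by (simp add: clsk_eq_cls coeff_module.rep_cls[OF coeff_module_galg])

lemma Hk_rep:
  "group G \<Longrightarrow> X \<in> Hk G n
    \<Longrightarrow> rep X \<in> galg_cochains G n \<and> cobound G n (rep X) = 0 \<and> X = clsk G n (rep X)"
  unfolding Hk_def Ck_def by (simp add: clsk_eq_cls coeff_module.cocycle_class_rep[OF coeff_module_galg])

lemma Hk_I: "f \<in> galg_cochains G n \<Longrightarrow> cobound G n f = 0 \<Longrightarrow> clsk G n f \<in> Hk G n"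
  by (auto simp: Hk_def Ck_def)

lemma galg_cohomologous_scale:
  "group G \<Longrightarrow> galg_cohomologous G n f g \<Longrightarrow> galg_cohomologous G n (\<lambda>xs y. c * f xs y) (\<lambda>xs y. c * g xs y)"
  using galg_cobs_scale[of G "f - g" n c] by (simp add: galg_cohomologous_iff fun_diff_def right_diff_distrib)

lemma rep_Smul_k:
  assumes G: "group G" and f: "f \<in> galg_cochains G n"
  shows "rep (Smul_k G n c (clsk G n f)) \<in> galg_cochains G n
    \<and> galg_cohomologous G n (rep (Smul_k G n c (clsk G n f))) (\<lambda>xs y. c * f xs y)"
proof -
  have r: "rep (clsk G n f) \<in> galg_cochains G n" "galg_cohomologous G n (rep (clsk G n f)) f"
    using rep_clsk[OF G f] by auto
  show ?thesis
    using rep_clsk[OF G galg_cochains_scale[OF r(1)], of c] galg_cohomologous_scale[OF G r(2), of c]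
    by (auto simp: Smul_k_def intro: galg_cohomologous_trans[OF G])
qed

lemma cupc_galg_cohomologous_left:
  assumes G: "group G" and uu': "galg_cohomologous G m u u'"
    and g: "g \<in> galg_cochains G n" "cobound G n g = 0"
  shows "galg_cohomologous G (m+n) (cupc G (gmult G) m n u g) (cupc G (gmult G) m n u' g)"
  using G uu'[unfolded galg_cohomologous_iff[OF G]]
proof (cases rule: galg_cobs_cases)
  case zero
  then show ?thesis using galg_cohomologous_refl[OF G] by simp
next
  case (cobound m' b)
  then have "cupc G (gmult G) m n u g - cupc G (gmult G) m n u' g
      = cobound G (m' + n) (cupc G (gmult G) m' n b g)"
    by (simp add: cupc_diff_left[symmetric] cobound_cupc_gmult g(2) cupc_zero_right zero_fun_def[symmetric])
  then show ?thesis using galg_cobs_cobound[OF G galg_cochains_cupc[OF G cobound(2) g(1)]] cobound(1)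
    by (simp add: galg_cohomologous_iff[OF G])
qed

lemma cupc_galg_cohomologous_right:
  assumes G: "group G" and f: "f \<in> galg_cochains G m" "cobound G m f = 0"
    and vv': "galg_cohomologous G n v v'"
  shows "galg_cohomologous G (m+n) (cupc G (gmult G) m n f v) (cupc G (gmult G) m n f v')"
  using G vv'[unfolded galg_cohomologous_iff[OF G]]
proof (cases rule: galg_cobs_cases)
  case zero
  then show ?thesis using galg_cohomologous_refl[OF G] by simp
next
  case (cobound n' b)
  then have "cupc G (gmult G) m n f v - cupc G (gmult G) m n f v'
      = (\<lambda>xs. signed m (cobound G (m + n') (cupc G (gmult G) m n' f b) xs))"
    unfolding cupc_diff_right[symmetric] cobound(3)
    by (simp add: cobound_cupc_gmult f(2) cupc_zero_left fun_eq_iff signed_signed_cancel)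
  then show ?thesis
    using galg_cobs_signed[OF G galg_cobs_cobound[OF G galg_cochains_cupc[OF G f(1) cobound(2)]]]
      cobound(1)
    by (simp add: galg_cohomologous_iff[OF G])
qed

lemma rep_Cup_k:
  assumes G: "group G" and f: "f \<in> galg_cochains G m" "cobound G m f = 0"
    and g: "g \<in> galg_cochains G n" "cobound G n g = 0"
  shows "rep (Cup_k G m n (clsk G m f) (clsk G n g)) \<in> galg_cochains G (m+n)
    \<and> galg_cohomologous G (m+n) (rep (Cup_k G m n (clsk G m f) (clsk G n g))) (cupc G (gmult G) m n f g)"
proof -
  define f' where "f' = rep (clsk G m f)"
  define g' where "g' = rep (clsk G n g)"
  have f': "f' \<in> galg_cochains G m" "galg_cohomologous G m f' f"
    using rep_clsk[OF G f(1)] by (auto simp: f'_def)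
  have g': "g' \<in> galg_cochains G n" "galg_cohomologous G n g' g"
    using rep_clsk[OF G g(1)] by (auto simp: g'_def)
  have "galg_cohomologous G (m+n) (cupc G (gmult G) m n f' g') (cupc G (gmult G) m n f g')"
    using galg_cohomologous_cocycle[OF G g'(2) g(2)] by (rule cupc_galg_cohomologous_left[OF G f'(2) g'(1)])
  moreover have "galg_cohomologous G (m+n) (cupc G (gmult G) m n f g') (cupc G (gmult G) m n f g)"
    by (rule cupc_galg_cohomologous_right[OF G f g'(2)])
  moreover have "rep (Cup_k G m n (clsk G m f) (clsk G n g)) \<in> galg_cochains G (m+n)
    \<and> galg_cohomologous G (m+n) (rep (Cup_k G m n (clsk G m f) (clsk G n g))) (cupc G (gmult G) m n f' g')"
    using rep_clsk[OF G galg_cochains_cupc[OF G f'(1) g'(1)]] by (simp add: Cup_k_def f'_def g'_def)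
  ultimately show ?thesis by (blast intro: galg_cohomologous_trans[OF G])
qed

lemma Add_k_Smul_k:
  assumes G: "group G" and u: "u \<in> galg_cochains G n" and v: "v \<in> galg_cochains G n"
  shows "Add_k G n (Smul_k G n c (clsk G n u)) (clsk G n v) = clsk G n ((\<lambda>xs y. c * u xs y) + v)"
proof -
  have "galg_cohomologous G n (rep (Smul_k G n c (clsk G n u)) + rep (clsk G n v)) ((\<lambda>xs y. c * u xs y) + v)"
    using rep_Smul_k[OF G u, of c] rep_clsk[OF G v] by (intro galg_cohomologous_add[OF G]) auto
  then show ?thesis by (simp add: Add_k_def clsk_eq[OF G])
qed

lemma Add_k_Cup_k_Smul_k:
  assumes G: "group G"
    and f: "f \<in> galg_cochains G m" "cobound G m f = 0" and g: "g \<in> galg_cochains G n" "cobound G n g = 0"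
    and u: "u \<in> galg_cochains G (Suc m)" "cobound G (Suc m) u = 0"
    and v: "v \<in> galg_cochains G (Suc n)" "cobound G (Suc n) v = 0"
  shows "Add_k G (Suc (m + n)) (Cup_k G (Suc m) n (clsk G (Suc m) u) (clsk G n g))
      (Smul_k G (Suc (m + n)) c (Cup_k G m (Suc n) (clsk G m f) (clsk G (Suc n) v)))
    = clsk G (Suc (m + n)) (cupc G (gmult G) (Suc m) n u g + (\<lambda>xs y. c * cupc G (gmult G) m (Suc n) f v xs y))"
proof -
  define Z where "Z = Cup_k G m (Suc n) (clsk G m f) (clsk G (Suc n) v)"
  have Z: "rep Z \<in> galg_cochains G (Suc (m + n))"
    "galg_cohomologous G (Suc (m + n)) (rep Z) (cupc G (gmult G) m (Suc n) f v)"
    using rep_Cup_k[OF G f v] by (simp_all add: Z_def)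
  have "galg_cohomologous G (Suc (m + n)) (rep (Smul_k G (Suc (m + n)) c Z))
      (\<lambda>xs y. c * cupc G (gmult G) m (Suc n) f v xs y)"
    using rep_clsk[OF G galg_cochains_scale[OF Z(1)], of c] galg_cohomologous_scale[OF G Z(2)]
    by (auto simp: Smul_k_def intro: galg_cohomologous_trans[OF G])
  then have "galg_cohomologous G (Suc (m + n))
      (rep (Cup_k G (Suc m) n (clsk G (Suc m) u) (clsk G n g)) + rep (Smul_k G (Suc (m + n)) c Z))
      (cupc G (gmult G) (Suc m) n u g + (\<lambda>xs y. c * cupc G (gmult G) m (Suc n) f v xs y))"
    using rep_Cup_k[OF G u g] by (intro galg_cohomologous_add[OF G]) simp_all
  then show ?thesis by (simp add: Add_k_def Z_def clsk_eq[OF G])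
qed

text \<open>\<open>bockstein_k\<close> realises \<open>\<beta>\<^sub>G \<otimes> id\<^sub>k\<close> under \<open>H\<^sup>*(G, kG) = H\<^sup>*(G, \<bbbF>\<^sub>pG) \<otimes> k\<close>.\<close>
definition int_decomp ::
  "('g,'b) monoid_scheme \<Rightarrow> nat \<Rightarrow> nat \<Rightarrow> ('g list \<Rightarrow> 'g \<Rightarrow> 'k::field) \<Rightarrow> ('k \<times> ('g list \<Rightarrow> 'g \<Rightarrow> int)) list" where
  "int_decomp G p r f = (SOME L. modp_cocycles G (int p) r L \<and> kcomb_galg L = f)"

definition bockstein_k ::
  "('g,'b) monoid_scheme \<Rightarrow> nat \<Rightarrow> nat \<Rightarrow> ('g list \<Rightarrow> 'g \<Rightarrow> 'k::field) set \<Rightarrow> ('g list \<Rightarrow> 'g \<Rightarrow> 'k) set" where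
  "bockstein_k G p r X = clsk G (Suc r) (kcomb_galg (bock_list G (int p) r (int_decomp G p r (rep X))))"

locale modular_group_algebra =
  fixes G :: "('g,'b) monoid_scheme" and p :: nat and field :: "'k::field itself"
  assumes group: "group G" and finite: "finite (carrier G)" and prime: "prime p"
    and char: "CHAR('k) = p"
begin

lemma p_nonzero: "int p \<noteq> 0"
  using prime by (auto simp: prime_gt_0_nat)

lemma int_decomp:
  assumes "f \<in> galg_cochains G r" "cobound G r f = 0"
  shows "modp_cocycles G (int p) r (int_decomp G p r f) \<and> kcomb_galg (int_decomp G p r f) = (f :: 'g list \<Rightarrow> 'g \<Rightarrow> 'k)"
  using exists_modp_cocycles_decomposition[OF group finite assms prime char]
  unfolding int_decomp_def by (rule someI_ex)

lemma bockstein_k_clsk: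
  assumes f: "f \<in> galg_cochains G r" "cobound G r f = 0"
    and L: "modp_cocycles G (int p) r L" "galg_cohomologous G r (kcomb_galg L) (f :: 'g list \<Rightarrow> 'g \<Rightarrow> 'k)"
  shows "bockstein_k G p r (clsk G r f) = clsk G (Suc r) (kcomb_galg (bock_list G (int p) r L))"
proof -
  define g where "g = rep (clsk G r f)"
  have g: "g \<in> galg_cochains G r" "galg_cohomologous G r g f" using rep_clsk[OF group f(1)] by (auto simp: g_def)
  define L' where "L' = int_decomp G p r g"
  have L': "modp_cocycles G (int p) r L'" "kcomb_galg L' = g"
    using int_decomp[OF g(1) galg_cohomologous_cocycle[OF group g(2) f(2)]] by (auto simp: L'_def)
  have "galg_cohomologous G r (kcomb_galg L) (kcomb_galg L')"
    using galg_cohomologous_trans[OF group L(2) galg_cohomologous_sym[OF group g(2)]] L'(2) by simp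
  then have "galg_cohomologous G (Suc r) (kcomb_galg (bock_list G (int p) r L)) (kcomb_galg (bock_list G (int p) r L'))"
    unfolding galg_cohomologous_iff[OF group]
    by (rule kcomb_galg_bock_list_cohomologous[OF group finite prime char L(1) L'(1)])
  then show ?thesis by (simp add: bockstein_k_def g_def[symmetric] L'_def[symmetric] clsk_eq[OF group])
qed

lemma bockstein_k_eq:
  assumes "X \<in> Hk G r"
  obtains L where "modp_cocycles G (int p) r L" "kcomb_galg L = (rep X :: 'g list \<Rightarrow> 'g \<Rightarrow> 'k)"
    "X = clsk G r (rep X)" "bockstein_k G p r X = clsk G (Suc r) (kcomb_galg (bock_list G (int p) r L))"
  using int_decomp Hk_rep[OF group assms] by (auto simp: bockstein_k_def)

lemma bockstein_k_Hk:
  assumes X: "X \<in> Hk G r"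
  shows "bockstein_k G p r X \<in> (Hk G (Suc r) :: ('g list \<Rightarrow> 'g \<Rightarrow> 'k) set set)"
proof -
  obtain L :: "('k \<times> _) list" where L: "modp_cocycles G (int p) r L"
    and "kcomb_galg L = rep X" "X = clsk G r (rep X)"
    and B: "bockstein_k G p r X = clsk G (Suc r) (kcomb_galg (bock_list G (int p) r L))"
    by (rule bockstein_k_eq[OF X])
  show ?thesis unfolding B
    by (intro Hk_I kcomb_galg_bock_list_mem[OF group p_nonzero L] cobound_kcomb_galg_bock_list[OF p_nonzero L])
qed

lemma bockstein_k_bockstein_k:
  assumes X: "X \<in> Hk G r"
  shows "bockstein_k G p (Suc r) (bockstein_k G p r X) = (clsk G (Suc (Suc r)) 0 :: ('g list \<Rightarrow> 'g \<Rightarrow> 'k) set)"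
proof -
  obtain L :: "('k \<times> _) list" where L: "modp_cocycles G (int p) r L"
    and "kcomb_galg L = rep X" "X = clsk G r (rep X)"
    and B: "bockstein_k G p r X = clsk G (Suc r) (kcomb_galg (bock_list G (int p) r L))"
    by (rule bockstein_k_eq[OF X])
  have BL: "modp_cocycles G (int p) (Suc r) (bock_list G (int p) r L)"
    by (rule modp_cocycles_bock_list[OF group p_nonzero L])
  have "bockstein_k G p (Suc r) (bockstein_k G p r X)
      = clsk G (Suc (Suc r)) (kcomb_galg (bock_list G (int p) (Suc r) (bock_list G (int p) r L)))"
    unfolding B
    by (rule bockstein_k_clsk[OF kcomb_galg_bock_list_mem[OF group p_nonzero L]
          cobound_kcomb_galg_bock_list[OF p_nonzero L] BL galg_cohomologous_refl[OF group]])
  also have "bock_list G (int p) (Suc r) (bock_list G (int p) r L) = map (\<lambda>(c, \<phi>). (c, 0)) L"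
  proof -
    have "bockc G (int p) (Suc r) (bockc G (int p) r \<phi>) = 0" if "(c, \<phi>) \<in> set L" for c \<phi>
      using L that by (intro bockc_zero_if_cocycle bockc_cocycle[OF p_nonzero]) (auto simp: modp_cocycles_def)
    then show ?thesis by (auto simp: bock_list_def)
  qed
  finally show ?thesis by (simp add: kcomb_galg_def case_prod_beta zero_fun_def)
qed

lemma bockstein_k_linear:
  assumes X: "X \<in> Hk G r" and Y: "Y \<in> Hk G r"
  shows "bockstein_k G p r (Add_k G r (Smul_k G r c X) Y)
       = Add_k G (Suc r) (Smul_k G (Suc r) c (bockstein_k G p r X)) (bockstein_k G p r (Y :: ('g list \<Rightarrow> 'g \<Rightarrow> 'k) set))"
proof -
  obtain LX :: "('k \<times> _) list" where LX: "modp_cocycles G (int p) r LX"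
    and fX: "kcomb_galg LX = rep X" "X = clsk G r (rep X)"
    and BX: "bockstein_k G p r X = clsk G (Suc r) (kcomb_galg (bock_list G (int p) r LX))"
    by (rule bockstein_k_eq[OF X])
  obtain LY :: "('k \<times> _) list" where LY: "modp_cocycles G (int p) r LY"
    and fY: "kcomb_galg LY = rep Y" "Y = clsk G r (rep Y)"
    and BY: "bockstein_k G p r Y = clsk G (Suc r) (kcomb_galg (bock_list G (int p) r LY))"
    by (rule bockstein_k_eq[OF Y])
  have f: "rep X \<in> galg_cochains G r" "cobound G r (rep X) = 0" using Hk_rep[OF group X] by auto
  have g: "rep Y \<in> galg_cochains G r" "cobound G r (rep Y) = 0" using Hk_rep[OF group Y] by auto
  define L where "L = map (\<lambda>(c', \<phi>). (c * c', \<phi>)) LX @ LY"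
  have L: "modp_cocycles G (int p) r L"
    unfolding L_def by (intro modp_cocycles_append modp_cocycles_scale LX LY)
  have "bockstein_k G p r (Add_k G r (Smul_k G r c X) Y) = bockstein_k G p r (clsk G r (kcomb_galg L))"
    by (subst fX(2), subst fY(2))
      (simp add: Add_k_Smul_k[OF group f(1) g(1)] L_def kcomb_galg_append kcomb_galg_scale fX(1) fY(1))
  also have "\<dots> = clsk G (Suc r) (kcomb_galg (bock_list G (int p) r L))"
    using galg_cochains_add[OF group galg_cochains_scale[OF f(1)] g(1)] f(2) g(2)
    by (intro bockstein_k_clsk L galg_cohomologous_refl[OF group])
      (simp_all add: L_def kcomb_galg_append kcomb_galg_scale fX(1) fY(1) cobound_add cobound_scale
        zero_fun_def)
  also have "\<dots> = Add_k G (Suc r) (Smul_k G (Suc r) c (bockstein_k G p r X)) (bockstein_k G p r Y)"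
    using kcomb_galg_bock_list_mem[OF group p_nonzero LX] kcomb_galg_bock_list_mem[OF group p_nonzero LY]
    by (simp add: BX BY Add_k_Smul_k[OF group] L_def bock_list_append bock_list_scale kcomb_galg_append
        kcomb_galg_scale)
  finally show ?thesis .
qed

end

definition product_list ::
  "(('g list \<Rightarrow> 'g \<Rightarrow> int) \<Rightarrow> ('g list \<Rightarrow> 'g \<Rightarrow> int) \<Rightarrow> ('g list \<Rightarrow> 'g \<Rightarrow> int))
   \<Rightarrow> ('k::field \<times> ('g list \<Rightarrow> 'g \<Rightarrow> int)) list \<Rightarrow> ('k \<times> ('g list \<Rightarrow> 'g \<Rightarrow> int)) list
   \<Rightarrow> ('k \<times> ('g list \<Rightarrow> 'g \<Rightarrow> int)) list" where
  "product_list op LX LY = concat (map (\<lambda>x. map (\<lambda>z. (fst x * fst z, op (snd x) (snd z))) LY) LX)"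

lemma sum_list_fun_apply: "(sum_list (map F xs)) y = sum_list (map (\<lambda>x. F x y) xs)"
  by (induction xs) auto

lemma sum_list_swap: "(\<Sum>x\<leftarrow>A. \<Sum>z\<leftarrow>B. f x z) = (\<Sum>z\<leftarrow>B. \<Sum>x\<leftarrow>A. (f x z :: 'a::comm_monoid_add))"
  by (induction A) (simp_all add: sum_list_addf)

lemma sum_list_concat: "sum_list (concat xss) = sum_list (map sum_list xss)"
  by (induction xss) auto

lemma additive_sum_list: "additive \<phi> \<Longrightarrow> \<phi> (\<Sum>x\<leftarrow>xs. F x) = (\<Sum>x\<leftarrow>xs. \<phi> (F x))"
  by (induction xs) (simp_all add: additive.zero additive.add)

lemma kcomb_galg_sum_list: "kcomb_galg L xs y = (\<Sum>x\<leftarrow>L. fst x * of_int (snd x xs y))"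
  by (simp add: kcomb_galg_def sum_list_sum_nth atLeast0LessThan)

lemma kcomb_galg_product_list:
  "kcomb_galg (product_list op LX LY) xs y
     = (\<Sum>x\<leftarrow>LX. \<Sum>z\<leftarrow>LY. fst x * fst z * of_int (op (snd x) (snd z) xs y))"
  by (simp add: kcomb_galg_sum_list product_list_def sum_list_concat map_concat comp_def)

lemma cupc_kcomb_galg:
  "cupc G (gmult G) m n (kcomb_galg LX) (kcomb_galg LY) xs y
    = (\<Sum>x\<leftarrow>LX. \<Sum>z\<leftarrow>LY. fst x * fst z * (of_int (cupc G (gmult G) m n (snd x) (snd z) xs y) :: 'k::field))"
proof (cases "xs \<in> tuples G (m + n + 1)")
  case False then show ?thesis by (simp add: cupc_def)
next
  case True
  have k: "kcomb_galg L xs = (\<Sum>x\<leftarrow>L. (\<lambda>y. fst x * of_int (snd x xs y)))" for L :: "('k \<times> _) list" and xs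
    by (simp add: fun_eq_iff kcomb_galg_sum_list sum_list_fun_apply)
  have e: "gmult G (\<lambda>y. fst x * of_int (a y)) (\<lambda>y. fst z * of_int (b y)) y
      = fst x * fst z * (of_int (gmult G a b y) :: 'k)" for x z :: "'k \<times> 'c" and a b
    using gmult_of_int[of G a b, where 'r='k] by (simp add: gmult_scale_left gmult_scale_right fun_eq_iff mult.assoc)
  show ?thesis using True
    by (simp add: cupc_def k additive_sum_list[OF additive_gmult_left] additive_sum_list[OF additive_gmult_right]
        sum_list_fun_apply e sum_list_swap[where A=LY])
qed

lemma kcomb_galg_product_list_cupc:
  "kcomb_galg (product_list (cupc G (gmult G) m n) LX LY)
     = cupc G (gmult G) m n (kcomb_galg LX) (kcomb_galg (LY :: ('k::field \<times> _) list))"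
  by (simp add: fun_eq_iff kcomb_galg_product_list cupc_kcomb_galg)

lemma bock_list_product_list:
  "bock_list G p n (product_list op LX LY) = product_list (\<lambda>a b. bockc G p n (op a b)) LX LY"
  by (simp add: bock_list_def product_list_def map_concat comp_def case_prod_beta)

lemma modp_cocycles_product_list_cupc:
  assumes G: "group G" and p: "p \<noteq> 0" and LX: "modp_cocycles G p m LX" and LY: "modp_cocycles G p n LY"
  shows "modp_cocycles G p (m + n) (product_list (cupc G (gmult G) m n) LX LY)"
  unfolding modp_cocycles_def
proof
  fix w assume "w \<in> set (product_list (cupc G (gmult G) m n) LX LY)"
  then obtain x z where xz: "x \<in> set LX" "z \<in> set LY" "snd w = cupc G (gmult G) m n (snd x) (snd z)"
    by (auto simp: product_list_def)
  have x: "snd x \<in> galg_cochains G m" "all_dvd p (cobound G m (snd x))"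
    using LX xz(1) by (auto simp: modp_cocycles_def)
  have z: "snd z \<in> galg_cochains G n" "all_dvd p (cobound G n (snd z))"
    using LY xz(2) by (auto simp: modp_cocycles_def)
  show "snd w \<in> galg_cochains G (m + n) \<and> all_dvd p (cobound G (m + n) (snd w))"
    using xz(3) galg_cochains_cupc[OF G x(1) z(1)] bockc_cupc(1)[OF p x(2) z(2)] by simp
qed

lemma kcomb_galg_bock_list_product_list_cupc:
  assumes p: "p \<noteq> 0" and LX: "modp_cocycles G p m LX" and LY: "modp_cocycles G p n (LY :: ('k::field \<times> _) list)"
  shows "kcomb_galg (bock_list G p (m+n) (product_list (cupc G (gmult G) m n) LX LY))
    = cupc G (gmult G) (Suc m) n (kcomb_galg (bock_list G p m LX)) (kcomb_galg LY)
      + (\<lambda>xs. signed m (cupc G (gmult G) m (Suc n) (kcomb_galg LX) (kcomb_galg (bock_list G p n LY)) xs))"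
proof (rule ext, rule ext)
  fix xs y
  let ?L = "\<lambda>x z. cupc G (gmult G) (Suc m) n (bockc G p m (snd x)) (snd z) xs y"
  let ?R = "\<lambda>x z. cupc G (gmult G) m (Suc n) (snd x) (bockc G p n (snd z)) xs y"
  have inner: "bockc G p (m+n) (cupc G (gmult G) m n (snd x) (snd z)) xs y = ?L x z + signed m (?R x z)"
    if "x \<in> set LX" "z \<in> set LY" for x z
  proof -
    have "all_dvd p (cobound G m (snd x))" "all_dvd p (cobound G n (snd z))"
      using LX LY that by (auto simp: modp_cocycles_def)
    from bockc_cupc(2)[OF p this] show ?thesis by (simp add: signed_fun_apply)
  qed
  have "kcomb_galg (bock_list G p (m+n) (product_list (cupc G (gmult G) m n) LX LY)) xs y
     = (\<Sum>x\<leftarrow>LX. \<Sum>z\<leftarrow>LY. fst x * fst z * of_int (?L x z) + signed m (fst x * fst z * of_int (?R x z)))"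
    unfolding bock_list_product_list kcomb_galg_product_list
    by (intro arg_cong[where f=sum_list] map_cong refl)
      (simp add: inner signed_def distrib_left)
  also have "\<dots> = (\<Sum>x\<leftarrow>LX. \<Sum>z\<leftarrow>LY. fst x * fst z * of_int (?L x z))
      + signed m (\<Sum>x\<leftarrow>LX. \<Sum>z\<leftarrow>LY. fst x * fst z * of_int (?R x z))"
    by (simp add: sum_list_addf additive_sum_list[OF additive_signed])
  also have "\<dots> = cupc G (gmult G) (Suc m) n (kcomb_galg (bock_list G p m LX)) (kcomb_galg LY) xs y
      + signed m (cupc G (gmult G) m (Suc n) (kcomb_galg LX) (kcomb_galg (bock_list G p n LY)) xs y)"
    by (simp add: cupc_kcomb_galg bock_list_def comp_def case_prod_beta)
  finally show "kcomb_galg (bock_list G p (m+n) (product_list (cupc G (gmult G) m n) LX LY)) xs y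
    = (cupc G (gmult G) (Suc m) n (kcomb_galg (bock_list G p m LX)) (kcomb_galg LY)
      + (\<lambda>xs. signed m (cupc G (gmult G) m (Suc n) (kcomb_galg LX) (kcomb_galg (bock_list G p n LY)) xs))) xs y"
    by (simp add: signed_fun_apply)
qed

context modular_group_algebra
begin

lemma bockstein_k_leibniz:
  assumes X: "X \<in> Hk G m" and Y: "Y \<in> Hk G n"
  shows "bockstein_k G p (m + n) (Cup_k G m n X Y)
     = Add_k G (Suc (m + n)) (Cup_k G (Suc m) n (bockstein_k G p m X) Y)
        (Smul_k G (Suc (m + n)) ((-1) ^ m) (Cup_k G m (Suc n) X (bockstein_k G p n (Y :: ('g list \<Rightarrow> 'g \<Rightarrow> 'k) set))))"
proof -
  obtain LX :: "('k \<times> _) list" where LX: "modp_cocycles G (int p) m LX"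
    and fX: "kcomb_galg LX = rep X" "X = clsk G m (rep X)"
    and BX: "bockstein_k G p m X = clsk G (Suc m) (kcomb_galg (bock_list G (int p) m LX))"
    by (rule bockstein_k_eq[OF X])
  obtain LY :: "('k \<times> _) list" where LY: "modp_cocycles G (int p) n LY"
    and fY: "kcomb_galg LY = rep Y" "Y = clsk G n (rep Y)"
    and BY: "bockstein_k G p n Y = clsk G (Suc n) (kcomb_galg (bock_list G (int p) n LY))"
    by (rule bockstein_k_eq[OF Y])
  define f where "f = rep X"
  define g where "g = rep Y"
  have f: "f \<in> galg_cochains G m" "cobound G m f = 0" using Hk_rep[OF group X] by (auto simp: f_def)
  have g: "g \<in> galg_cochains G n" "cobound G n g = 0" using Hk_rep[OF group Y] by (auto simp: g_def)
  define KX where "KX = kcomb_galg (bock_list G (int p) m LX)"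
  define KY where "KY = kcomb_galg (bock_list G (int p) n LY)"
  have KX: "KX \<in> galg_cochains G (Suc m)" "cobound G (Suc m) KX = 0"
    unfolding KX_def by (intro kcomb_galg_bock_list_mem[OF group p_nonzero] cobound_kcomb_galg_bock_list[OF p_nonzero] LX)+
  have KY: "KY \<in> galg_cochains G (Suc n)" "cobound G (Suc n) KY = 0"
    unfolding KY_def by (intro kcomb_galg_bock_list_mem[OF group p_nonzero] cobound_kcomb_galg_bock_list[OF p_nonzero] LY)+
  define L where "L = product_list (cupc G (gmult G) m n) LX LY"
  have "bockstein_k G p (m + n) (Cup_k G m n X Y) = clsk G (Suc (m + n)) (kcomb_galg (bock_list G (int p) (m+n) L))"
    unfolding Cup_k_def f_def[symmetric] g_def[symmetric] L_def
    by (rule bockstein_k_clsk[OF galg_cochains_cupc[OF group f(1) g(1)] cupc_cocycle[OF f(2) g(2)]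
          modp_cocycles_product_list_cupc[OF group p_nonzero LX LY]])
      (simp add: kcomb_galg_product_list_cupc fX(1) fY(1) f_def g_def galg_cohomologous_refl[OF group])
  also have "kcomb_galg (bock_list G (int p) (m+n) L)
      = cupc G (gmult G) (Suc m) n KX g + (\<lambda>xs y. (-1) ^ m * cupc G (gmult G) m (Suc n) f KY xs y)"
    using kcomb_galg_bock_list_product_list_cupc[OF p_nonzero LX LY]
    by (simp add: L_def KX_def KY_def fX(1) fY(1) f_def g_def signed_fun_eq_power)
  also have "clsk G (Suc (m + n)) \<dots>
      = Add_k G (Suc (m + n)) (Cup_k G (Suc m) n (bockstein_k G p m X) Y)
          (Smul_k G (Suc (m + n)) ((-1) ^ m) (Cup_k G m (Suc n) X (bockstein_k G p n Y)))"
    using Add_k_Cup_k_Smul_k[OF group f g KX KY, where c = "(-1) ^ m"]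
    by (simp add: BX BY f_def g_def flip: KX_def KY_def fX(2) fY(2))
  finally show ?thesis .
qed

end

section \<open>Transfer along a subgroup\<close>

definition transfer :: "('g,'b) monoid_scheme \<Rightarrow> 'g set \<Rightarrow> ('g list \<Rightarrow> 'g \<Rightarrow> 'r::comm_ring_1) \<Rightarrow> 'g list \<Rightarrow> 'g \<Rightarrow> 'r" where
  "transfer G H f = (\<lambda>xs. if set xs \<subseteq> carrier G
      then (\<Sum>t\<in>ltransversal G H. cact G t (f (map (\<lambda>x. inv\<^bsub>G\<^esub> t \<otimes>\<^bsub>G\<^esub> x) xs)))
      else 0)"

lemma trc_eq_transfer: "trc G H f = transfer G H f"
  by (simp add: trc_def transfer_def)

lemma sum_list_sum_swap: "(\<Sum>x\<leftarrow>L. \<Sum>t\<in>T. f x t) = (\<Sum>t\<in>T. \<Sum>x\<leftarrow>L. (f x t :: 'a::comm_monoid_add))"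
  by (induction L) (simp_all add: sum.distrib)

locale finite_subgroup = group G for G :: "('g,'b) monoid_scheme" (structure) +
  fixes H :: "'g set"
  assumes subgroup: "subgroup H G" and finite: "finite (carrier G)"
begin

abbreviation T :: "'g set" where
  "T \<equiv> ltransversal G H"

lemma subset: "H \<subseteq> carrier G"
  using subgroup by (rule subgroup.subset)

lemma mem_l_coset_iff: "t \<in> carrier G \<Longrightarrow> x \<in> carrier G \<Longrightarrow> x \<in> t <# H \<longleftrightarrow> inv t \<otimes> x \<in> H"
proof
  assume t: "t \<in> carrier G" and x: "x \<in> carrier G" and "x \<in> t <# H"
  then obtain h where h: "h \<in> H" "x = t \<otimes> h" by (auto simp: l_coset_def)
  then show "inv t \<otimes> x \<in> H" using t subset by (auto simp: m_assoc[symmetric])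
next
  assume t: "t \<in> carrier G" and x: "x \<in> carrier G" and "inv t \<otimes> x \<in> H"
  moreover have "x = t \<otimes> (inv t \<otimes> x)" using t x by (simp add: m_assoc[symmetric])
  ultimately show "x \<in> t <# H" unfolding l_coset_def by blast
qed

lemma same_l_coset_iff:
  assumes "x \<in> carrier G" "y \<in> carrier G" "inv x \<otimes> y \<in> H" "t \<in> carrier G"
  shows "inv x \<otimes> t \<in> H \<longleftrightarrow> inv y \<otimes> t \<in> H"
proof
  assume "inv x \<otimes> t \<in> H"
  then have "inv (inv x \<otimes> y) \<otimes> (inv x \<otimes> t) \<in> H"
    using subgroup.m_closed[OF subgroup subgroup.m_inv_closed[OF subgroup assms(3)]] by blast
  then show "inv y \<otimes> t \<in> H" using assms by (simp add: inv_mult_group m_assoc)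
next
  assume "inv y \<otimes> t \<in> H"
  then have "(inv x \<otimes> y) \<otimes> (inv y \<otimes> t) \<in> H" using subgroup.m_closed[OF subgroup assms(3)] by blast
  then show "inv x \<otimes> t \<in> H" using assms by (simp add: m_assoc)
qed

lemma ltransversal:
  shows "T \<subseteq> carrier G" and "x \<in> carrier G \<Longrightarrow> \<exists>!t. t \<in> T \<and> inv t \<otimes> x \<in> H"
proof -
  define rep_of where "rep_of x = (SOME t. t \<in> carrier G \<and> inv x \<otimes> t \<in> H)" for x
  have rep_of: "rep_of x \<in> carrier G \<and> inv x \<otimes> rep_of x \<in> H" if "x \<in> carrier G" for x
    unfolding rep_of_def using that subgroup.one_closed[OF subgroup]
    by (intro someI[of "\<lambda>t. t \<in> carrier G \<and> inv x \<otimes> t \<in> H" x]) simp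
  have rep_of_eq: "rep_of x = rep_of y" if "x \<in> carrier G" "y \<in> carrier G" "inv x \<otimes> y \<in> H" for x y
  proof -
    have "(\<lambda>t. t \<in> carrier G \<and> inv x \<otimes> t \<in> H) = (\<lambda>t. t \<in> carrier G \<and> inv y \<otimes> t \<in> H)"
      using same_l_coset_iff[OF that] by (auto simp: fun_eq_iff)
    then show ?thesis by (simp add: rep_of_def)
  qed
  have "rep_of ` carrier G \<subseteq> carrier G \<and> (\<forall>x\<in>carrier G. \<exists>!t. t \<in> rep_of ` carrier G \<and> x \<in> t <# H)"
  proof (intro conjI ballI)
    show "rep_of ` carrier G \<subseteq> carrier G" using rep_of by auto
  next
    fix x assume x: "x \<in> carrier G"
    have r: "rep_of x \<in> carrier G" "inv (inv x \<otimes> rep_of x) \<in> H"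
      using rep_of[OF x] subgroup.m_inv_closed[OF subgroup] by auto
    then have r: "rep_of x \<in> carrier G" "inv (rep_of x) \<otimes> x \<in> H"
      using x by (simp_all add: inv_mult_group)
    show "\<exists>!t. t \<in> rep_of ` carrier G \<and> x \<in> t <# H"
    proof (rule ex1I[of _ "rep_of x"])
      show "rep_of x \<in> rep_of ` carrier G \<and> x \<in> rep_of x <# H" using x r by (simp add: mem_l_coset_iff)
    next
      fix t assume "t \<in> rep_of ` carrier G \<and> x \<in> t <# H"
      then obtain y where y: "y \<in> carrier G" "t = rep_of y" "inv (rep_of y) \<otimes> x \<in> H"
        using rep_of mem_l_coset_iff x by blast
      then have "(inv y \<otimes> rep_of y) \<otimes> (inv (rep_of y) \<otimes> x) \<in> H"
        using subgroup.m_closed[OF subgroup] rep_of[OF y(1)] by blast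
      then have "inv y \<otimes> x \<in> H" using y rep_of[OF y(1)] x by (simp add: m_assoc)
      then show "t = rep_of x" using rep_of_eq[OF y(1) x] y by simp
    qed
  qed
  then have T: "T \<subseteq> carrier G \<and> (\<forall>x\<in>carrier G. \<exists>!t. t \<in> T \<and> x \<in> t <# H)"
    unfolding ltransversal_def by (rule someI)
  then show "T \<subseteq> carrier G" by blast
  assume x: "x \<in> carrier G"
  have e: "(t \<in> T \<and> x \<in> t <# H) = (t \<in> T \<and> inv t \<otimes> x \<in> H)" for t
    using T mem_l_coset_iff x by blast
  from T x have "\<exists>!t. t \<in> T \<and> x \<in> t <# H" by blast
  then show "\<exists>!t. t \<in> T \<and> inv t \<otimes> x \<in> H" by (simp only: e)
qed

lemma finite_T: "finite T"
  using finite_subset[OF ltransversal(1) finite] .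

lemma inv_T: "t \<in> T \<Longrightarrow> inv t \<in> carrier G"
  using ltransversal(1) by auto

text \<open>Left multiplication by \<open>h\<close> permutes the cosets; \<open>coset_shift h\<close> is the induced
  permutation of \<open>T\<close>, sending \<open>t\<close> to the representative of \<open>h\<inverse> t H\<close>.\<close>
definition coset_shift :: "'g \<Rightarrow> 'g \<Rightarrow> 'g" where
  "coset_shift h t = (THE t'. t' \<in> T \<and> inv t' \<otimes> (inv h \<otimes> t) \<in> H)"

lemma coset_shift:
  "h \<in> carrier G \<Longrightarrow> t \<in> T \<Longrightarrow> coset_shift h t \<in> T \<and> inv (coset_shift h t) \<otimes> (inv h \<otimes> t) \<in> H"
  unfolding coset_shift_def using ltransversal by (intro theI'[OF ltransversal(2)]) auto

lemma inj_on_coset_shift: "h \<in> carrier G \<Longrightarrow> inj_on (coset_shift h) T"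
proof (rule inj_onI)
  fix t1 t2 assume h: "h \<in> carrier G" and t: "t1 \<in> T" "t2 \<in> T"
    and e: "coset_shift h t1 = coset_shift h t2"
  have tc: "t1 \<in> carrier G" "t2 \<in> carrier G" using t ltransversal(1) by auto
  define s where "s = coset_shift h t1"
  have s: "s \<in> T" "inv s \<otimes> (inv h \<otimes> t1) \<in> H" "inv s \<otimes> (inv h \<otimes> t2) \<in> H"
    using coset_shift[OF h t(1)] coset_shift[OF h t(2)] e by (auto simp: s_def)
  have sc: "s \<in> carrier G" using s(1) ltransversal(1) by auto
  have "inv (inv s \<otimes> (inv h \<otimes> t2)) \<otimes> (inv s \<otimes> (inv h \<otimes> t1)) \<in> H"
    using subgroup.m_closed[OF subgroup subgroup.m_inv_closed[OF subgroup s(3)] s(2)] .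
  moreover have "inv (inv s \<otimes> (inv h \<otimes> t2)) \<otimes> (inv s \<otimes> (inv h \<otimes> t1)) = inv t2 \<otimes> t1"
    using h tc sc by (simp add: inv_mult_group m_assoc)
  ultimately have "inv t2 \<otimes> t1 \<in> H" by simp
  moreover have "inv t1 \<otimes> t1 \<in> H" using tc subgroup.one_closed[OF subgroup] by simp
  ultimately show "t1 = t2" using ltransversal(2)[OF tc(1)] t by blast
qed

lemma coset_shift_image: "h \<in> carrier G \<Longrightarrow> coset_shift h ` T = T"
  by (rule endo_inj_surj[OF finite_T]) (use coset_shift inj_on_coset_shift in auto)

lemma transfer_apply:
  "transfer G H F xs y = (if set xs \<subseteq> carrier G \<and> y \<in> carrier G
     then (\<Sum>t\<in>T. F (map (\<lambda>x. inv t \<otimes> x) xs) (inv t \<otimes> y \<otimes> t)) else 0)"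
  by (simp add: transfer_def cact_def sum_fun_apply)

lemma transfer_summand_shift:
  assumes F: "F \<in> cochains G H (cact G) (galg G) n" and h: "h \<in> carrier G"
    and xs: "xs \<in> tuples G (Suc n)" and t: "t \<in> T"
  shows "cact G t (F (map (\<lambda>x. inv t \<otimes> x) (map (\<lambda>x. h \<otimes> x) xs)))
       = cact G h (cact G (coset_shift h t) (F (map (\<lambda>x. inv (coset_shift h t) \<otimes> x) xs)))"
proof -
  define \<sigma> where "\<sigma> = coset_shift h t"
  define s where "s = inv \<sigma> \<otimes> (inv h \<otimes> t)"
  have \<sigma>: "\<sigma> \<in> T" "s \<in> H" using coset_shift[OF h t] by (auto simp: \<sigma>_def s_def)
  have tc: "t \<in> carrier G" and \<sigma>c: "\<sigma> \<in> carrier G" using t \<sigma>(1) ltransversal(1) by auto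
  have sinv: "inv s = inv t \<otimes> (h \<otimes> \<sigma>)" using h tc \<sigma>c by (simp add: s_def inv_mult_group m_assoc)
  have sH: "inv s \<in> H" and sc: "inv s \<in> carrier G"
    using subgroup.m_inv_closed[OF subgroup \<sigma>(2)] subset by auto
  have m: "map (\<lambda>x. inv t \<otimes> x) (map (\<lambda>x. h \<otimes> x) xs) = map (\<lambda>x. inv s \<otimes> x) (map (\<lambda>x. inv \<sigma> \<otimes> x) xs)"
    using xs h tc \<sigma>c by (auto simp: mem_tuples_iff sinv m_assoc)
  have "map (\<lambda>x. inv \<sigma> \<otimes> x) xs \<in> tuples G (Suc n)"
    by (rule map_mult_in_tuples[OF is_group inv_T[OF \<sigma>(1)] xs])
  from cochainsD(3)[OF F sH this]
  have "F (map (\<lambda>x. inv t \<otimes> x) (map (\<lambda>x. h \<otimes> x) xs)) = cact G (inv s) (F (map (\<lambda>x. inv \<sigma> \<otimes> x) xs))"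
    by (simp only: m)
  then have "cact G t (F (map (\<lambda>x. inv t \<otimes> x) (map (\<lambda>x. h \<otimes> x) xs)))
      = cact G (t \<otimes> inv s) (F (map (\<lambda>x. inv \<sigma> \<otimes> x) xs))"
    by (simp add: cact_mult[OF tc sc])
  also have "t \<otimes> inv s = h \<otimes> \<sigma>" using tc h \<sigma>c by (simp add: sinv m_assoc[symmetric])
  also have "cact G (h \<otimes> \<sigma>) (F (map (\<lambda>x. inv \<sigma> \<otimes> x) xs)) = cact G h (cact G \<sigma> (F (map (\<lambda>x. inv \<sigma> \<otimes> x) xs)))"
    by (rule cact_mult[OF h \<sigma>c])
  finally show ?thesis by (simp only: \<sigma>_def)
qed

lemma transfer_cochains:
  assumes F: "F \<in> cochains G H (cact G) (galg G) n"
  shows "transfer G H F \<in> galg_cochains G n"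
proof (rule cochainsI)
  fix xs assume xs: "xs \<notin> tuples G (Suc n)"
  have "F (map (\<lambda>x. inv t \<otimes> x) xs) = 0" if "set xs \<subseteq> carrier G" for t
    using cochainsD(1)[OF F] xs that by (simp add: mem_tuples_iff)
  then show "transfer G H F xs = 0" by (simp add: transfer_def)
next
  fix xs show "transfer G H F xs \<in> galg G" by (simp add: transfer_apply galg_def)
next
  fix h xs assume h: "h \<in> carrier G" and xs: "xs \<in> tuples G (Suc n)"
  define u where "u t = cact G t (F (map (\<lambda>x. inv t \<otimes> x) xs))" for t
  have "map (\<lambda>x. h \<otimes> x) xs \<in> tuples G (Suc n)" by (rule map_mult_in_tuples[OF is_group h xs])
  then have "transfer G H F (map (\<lambda>x. h \<otimes> x) xs) = (\<Sum>t\<in>T. cact G h (u (coset_shift h t)))"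
    using transfer_summand_shift[OF F h xs] by (simp add: transfer_def mem_tuples_iff u_def)
  also have "\<dots> = cact G h (\<Sum>t\<in>coset_shift h ` T. u t)"
    by (simp add: cact_sum sum.reindex[OF inj_on_coset_shift[OF h]])
  also have "\<dots> = cact G h (transfer G H F xs)"
    using xs by (simp add: coset_shift_image[OF h] transfer_def mem_tuples_iff u_def)
  finally show "transfer G H F (map (\<lambda>x. h \<otimes> x) xs) = cact G h (transfer G H F xs)" .
qed

lemma transfer_cobound: "cobound G n (transfer G H F) = transfer G H (cobound G n F)"
proof (rule ext)
  fix xs
  show "cobound G n (transfer G H F) xs = transfer G H (cobound G n F) xs"
  proof (cases "xs \<in> tuples G (n+2)")
    case True
    have "set (del_at i xs) \<subseteq> carrier G" for i using True set_del_at[of i xs] by (auto simp: mem_tuples_iff)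
    then have "cobound G n (transfer G H F) xs
        = (\<Sum>i\<le>n+1. signed i (\<Sum>t\<in>T. cact G t (F (map (\<lambda>x. inv t \<otimes> x) (del_at i xs)))))"
      using True by (simp add: cobound_eq transfer_def del: sum.atMost_Suc)
    also have "\<dots> = (\<Sum>t\<in>T. \<Sum>i\<le>n+1. signed i (cact G t (F (map (\<lambda>x. inv t \<otimes> x) (del_at i xs)))))"
      by (simp add: signed_sum sum.swap[of _ T] del: sum.atMost_Suc)
    also have "\<dots> = transfer G H (cobound G n F) xs"
      using True map_mult_in_tuples[OF is_group inv_T, of _ xs "n+2"]
      by (simp add: transfer_def mem_tuples_iff cobound_eq cact_sum signed_additive[OF additive_cact]
          del_at_map del: sum.atMost_Suc)
    finally show ?thesis .
  next
    case False
    then have "cobound G n F (map (\<lambda>x. inv t \<otimes> x) xs) = 0" if "set xs \<subseteq> carrier G" for t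
      using that by (simp add: cobound_eq mem_tuples_iff del: sum.atMost_Suc)
    then show ?thesis using False by (simp add: cobound_eq transfer_def del: sum.atMost_Suc)
  qed
qed

lemma transfer_pointwise:
  "additive \<psi> \<Longrightarrow> transfer G H (\<lambda>xs y. \<psi> (F xs y)) = (\<lambda>xs y. \<psi> (transfer G H F xs y))"
  by (simp add: fun_eq_iff transfer_apply additive.zero additive.sum)

lemma transfer_diff: "transfer G H (F - F') = transfer G H F - transfer G H (F' :: 'g list \<Rightarrow> 'g \<Rightarrow> 'r::comm_ring_1)"
  by (simp add: fun_eq_iff transfer_apply sum_subtractf)

lemma transfer_all_dvd: "all_dvd p F \<Longrightarrow> all_dvd p (transfer G H F)"
  by (simp add: all_dvd_def transfer_apply dvd_sum)

lemma transfer_kcomb_galg: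
  "transfer G H (kcomb_galg L) = kcomb_galg (map (\<lambda>(c, \<phi>). (c, transfer G H \<phi>)) (L :: ('k::field \<times> _) list))"
proof (rule ext, rule ext)
  fix xs y
  show "transfer G H (kcomb_galg L) xs y = kcomb_galg (map (\<lambda>(c, \<phi>). (c, transfer G H \<phi>)) L) xs y"
  proof (cases "set xs \<subseteq> carrier G \<and> y \<in> carrier G")
    case True then show ?thesis
      by (simp add: transfer_apply kcomb_galg_sum_list comp_def case_prod_beta of_int_sum
          sum_distrib_left sum_list_sum_swap)
  next
    case False
    then have "transfer G H \<phi> xs y = 0" "transfer G H (kcomb_galg L) xs y = 0"
      for \<phi> :: "'g list \<Rightarrow> 'g \<Rightarrow> int"
      by (auto simp: transfer_apply)
    then show ?thesis by (simp add: kcomb_galg_sum_list comp_def case_prod_beta)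
  qed
qed

end

abbreviation triv_cochains :: "('g,'b) monoid_scheme \<Rightarrow> 'g set \<Rightarrow> nat \<Rightarrow> ('g list \<Rightarrow> 'r::comm_ring_1) set" where
  "triv_cochains G H n \<equiv> cochains G H (\<lambda>h a. a) UNIV n"

abbreviation triv_cobs :: "('g,'b) monoid_scheme \<Rightarrow> 'g set \<Rightarrow> nat \<Rightarrow> ('g list \<Rightarrow> 'r::comm_ring_1) set" where
  "triv_cobs G H n \<equiv> cobs G H (\<lambda>h a. a) UNIV n"

abbreviation triv_cohomologous ::
  "('g,'b) monoid_scheme \<Rightarrow> 'g set \<Rightarrow> nat \<Rightarrow> ('g list \<Rightarrow> 'r::comm_ring_1) \<Rightarrow> ('g list \<Rightarrow> 'r) \<Rightarrow> bool" where
  "triv_cohomologous G H \<equiv> coeff_module.cohomologous G H (\<lambda>h a. a) UNIV"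

lemma coeff_module_triv:
  "group G \<Longrightarrow> H \<subseteq> carrier G \<Longrightarrow> coeff_module G H (\<lambda>h a. a) (UNIV :: 'm::ab_group_add set)"
  unfolding coeff_module_def by (simp add: additive_def)

lemma triv_cochains_pointwise: "\<psi> 0 = 0 \<Longrightarrow> f \<in> triv_cochains G H n \<Longrightarrow> (\<lambda>xs. \<psi> (f xs)) \<in> triv_cochains G H n"
  by (simp add: cochains_def)

lemma clst_eq_cls: "group G \<Longrightarrow> H \<subseteq> carrier G \<Longrightarrow> clst G H n = coeff_module.cls G H (\<lambda>h a. a) UNIV n"
  by (simp add: fun_eq_iff clst_def Ct_def coeff_module.cls_def[OF coeff_module_triv])

lemma Ht_rep:
  "group G \<Longrightarrow> H \<subseteq> carrier G \<Longrightarrow> X \<in> Ht G H n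
    \<Longrightarrow> rep X \<in> triv_cochains G H n \<and> cobound G n (rep X) = 0 \<and> X = clst G H n (rep X)"
  unfolding Ht_def Ct_def by (simp add: clst_eq_cls coeff_module.cocycle_class_rep[OF coeff_module_triv])

lemma kcomb_eq_sum: "kcomb L = (\<Sum>j<length L. (\<lambda>xs. fst (L ! j) * of_int (snd (L ! j) xs)))"
  by (simp add: kcomb_def fun_eq_iff sum_fun_apply)

lemma cobound_kcomb:
  fixes L :: "('k::field \<times> ('g list \<Rightarrow> int)) list"
  shows "cobound G n (kcomb L) = kcomb (map (\<lambda>(c, \<phi>). (c, cobound G n \<phi>)) L)"
proof -
  have e: "cobound G n (\<lambda>xs. c * (of_int (\<phi> xs) :: 'k::field)) = (\<lambda>xs. c * of_int (cobound G n \<phi> xs))" for c \<phi>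
    by (rule cobound_additive) (unfold_locales, simp add: distrib_left)
  show ?thesis by (simp add: kcomb_eq_sum cobound_sum e case_prod_beta)
qed

lemma kcomb_mem: "(\<And>x. x \<in> set L \<Longrightarrow> snd x \<in> triv_cochains G H n) \<Longrightarrow> kcomb L \<in> triv_cochains G H n"
  by (simp add: cochains_def kcomb_def)

lemma cobound_kcomb_Ztp:
  assumes "CHAR('k::field) = p" "\<forall>x\<in>set L. snd x \<in> Ztp G H (int p) r"
  shows "cobound G r (kcomb (L :: ('k \<times> _) list)) = 0"
proof -
  have "(of_int (cobound G r (snd (L ! j)) xs) :: 'k) = 0" if "j < length L" for j xs
    using assms nth_mem[OF that] by (simp add: Ztp_def of_int_eq_0_iff_char_dvd)
  then show ?thesis
    unfolding cobound_kcomb by (simp add: kcomb_def fun_eq_iff case_prod_beta)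
qed

lemma exists_Ztp_decomposition:
  assumes G: "finite (carrier G)" and f: "f \<in> triv_cochains G H r" "cobound G r f = 0"
    and p: "prime p" and ch: "CHAR('k::field) = p"
  shows "\<exists>L. (\<forall>j<length L. snd (L ! j) \<in> Ztp G H (int p) r) \<and> kcomb L = (f :: 'g list \<Rightarrow> 'k)"
proof -
  have "finite (f ` tuples G (Suc r))" using finite_tuples[OF G] by simp
  then obtain e :: "'k list" where e: "indep_modp p e" "\<forall>v\<in>f ` tuples G (Suc r). \<exists>d. v = zcomb e d"
    using exists_indep_modp_spanning[OF _ p ch] by blast
  have ex: "\<exists>d. f xs = zcomb e d" for xs
    using e(2) cochainsD(1)[OF f(1), of xs] by (cases "xs \<in> tuples G (Suc r)") (auto, metis zcomb_zero)
  define \<phi> where "\<phi> i = (\<lambda>xs. coord e (f xs) i)" for i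
  define L where "L = map (\<lambda>i. (e ! i, \<phi> i)) [0..<length e]"
  have kL: "kcomb (map (\<lambda>i. (e ! i, F i)) [0..<length e]) xs = zcomb e (\<lambda>i. F i xs)" for F xs
    by (simp add: kcomb_def zcomb_def mult.commute)
  have L_eq: "kcomb L = f" using zcomb_coord[OF ex] by (simp add: fun_eq_iff L_def kL \<phi>_def)
  have "\<phi> i \<in> Ztp G H (int p) r" if i: "i < length e" for i
  proof -
    have "int p dvd cobound G r (\<phi> i) xs" for xs
    proof -
      have "zcomb e (\<lambda>i. cobound G r (\<phi> i) xs) = cobound G r (kcomb L) xs"
        by (simp add: cobound_kcomb L_def comp_def kL)
      also have "\<dots> = zcomb e (\<lambda>i. 0)" using L_eq f(2) by simp
      finally show ?thesis using indep_modp_dvd[OF e(1) _ i, of "\<lambda>i. cobound G r (\<phi> i) xs" "\<lambda>i. 0"] by simp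
    qed
    moreover have "\<phi> i \<in> triv_cochains G H r" unfolding \<phi>_def by (rule triv_cochains_pointwise[OF _ f(1)]) simp
    ultimately show ?thesis by (simp add: Ztp_def)
  qed
  then have "\<forall>j<length L. snd (L ! j) \<in> Ztp G H (int p) r" by (simp add: L_def)
  with L_eq show ?thesis by blast
qed

lemma rep_clst:
  "group G \<Longrightarrow> H \<subseteq> carrier G \<Longrightarrow> f \<in> triv_cochains G H n
    \<Longrightarrow> rep (clst G H n f) \<in> triv_cochains G H n \<and> rep (clst G H n f) - f \<in> triv_cobs G H n"
  using coeff_module.rep_cls[OF coeff_module_triv, of G H f n]
  by (simp add: clst_eq_cls coeff_module.cohomologous_def[OF coeff_module_triv])

definition theta :: "'g \<Rightarrow> ('g list \<Rightarrow> 'r::zero) \<Rightarrow> 'g list \<Rightarrow> 'g \<Rightarrow> 'r" where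
  "theta g f = (\<lambda>xs y. if y = g then f xs else 0)"

lemma thetac_eq_theta: "thetac G g f = theta g f"
  by (simp add: thetac_def theta_def)

lemma additive_theta: "additive (theta g :: ('g list \<Rightarrow> 'r::ab_group_add) \<Rightarrow> _)"
  by unfold_locales (simp add: theta_def fun_eq_iff)

lemma theta_scale: "theta g (\<lambda>xs. c * f xs) = (\<lambda>xs y. (c :: 'r::ring) * theta g f xs y)"
  by (simp add: theta_def fun_eq_iff)

lemma theta_cobound: "cobound G n (theta g f) = theta g (cobound G n (f :: 'g list \<Rightarrow> 'r::ab_group_add))"
proof -
  have "additive (\<lambda>a y. if y = g then a else (0::'r))" by unfold_locales (simp add: fun_eq_iff)
  then show ?thesis unfolding theta_def by (rule cobound_additive)
qed

lemma theta_kcomb: "theta g (kcomb L) = kcomb_galg (map (\<lambda>(c, \<phi>). (c, theta g \<phi>)) L)"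
  by (simp add: fun_eq_iff theta_def kcomb_def kcomb_galg_def case_prod_beta)

lemma (in group) subgroup_centralizer: "g \<in> carrier G \<Longrightarrow> subgroup (centralizer G g) G"
proof (rule subgroupI)
  assume g: "g \<in> carrier G"
  show "centralizer G g \<subseteq> carrier G" by (auto simp: centralizer_def)
  show "centralizer G g \<noteq> {}" using g by (auto simp: centralizer_def)
  fix a assume "a \<in> centralizer G g"
  then have a: "a \<in> carrier G" "a \<otimes> g = g \<otimes> a" by (auto simp: centralizer_def)
  have "inv a \<otimes> g = inv a \<otimes> (g \<otimes> a) \<otimes> inv a" using a g by (simp add: m_assoc)
  also have "\<dots> = g \<otimes> inv a" using a g by (simp flip: a(2) add: m_assoc)
  finally show "inv a \<in> centralizer G g" using a by (simp add: centralizer_def)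
  fix b assume "b \<in> centralizer G g"
  then show "a \<otimes> b \<in> centralizer G g"
    using a g by (auto simp: centralizer_def m_assoc) (metis m_assoc)
qed

locale centralizer_element = group G for G :: "('g,'b) monoid_scheme" (structure) +
  fixes g :: 'g
  assumes finite_carrier: "finite (carrier G)" and g_mem: "g \<in> carrier G"

sublocale centralizer_element \<subseteq> finite_subgroup G "centralizer G g"
  by (intro finite_subgroup.intro finite_subgroup_axioms.intro is_group subgroup_centralizer g_mem
      finite_carrier)

context centralizer_element
begin

lemma theta_cochains:
  assumes f: "f \<in> triv_cochains G (centralizer G g) n"
  shows "theta g f \<in> cochains G (centralizer G g) (cact G) (galg G) n"
proof (rule cochainsI)
  fix xs assume "xs \<notin> tuples G (Suc n)"
  then show "theta g f xs = 0" using cochainsD(1)[OF f] by (simp add: theta_def fun_eq_iff)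
next
  fix xs show "theta g f xs \<in> galg G" using g_mem by (auto simp: theta_def galg_def)
next
  fix s xs assume s: "s \<in> centralizer G g" and xs: "xs \<in> tuples G (Suc n)"
  have sc: "s \<in> carrier G" "s \<otimes> g = g \<otimes> s" using s by (auto simp: centralizer_def)
  have "inv s \<otimes> y \<otimes> s = g \<longleftrightarrow> y = g" if y: "y \<in> carrier G" for y
  proof -
    have "inv s \<otimes> y \<otimes> s = g \<longleftrightarrow> inv s \<otimes> (y \<otimes> s) = g" using sc y by (simp add: m_assoc)
    also have "\<dots> \<longleftrightarrow> y \<otimes> s = g \<otimes> s" using sc y g_mem by (simp add: inv_solve_left')
    finally show ?thesis using sc y g_mem by simp
  qed
  then show "theta g f (map (\<lambda>x. s \<otimes> x) xs) = cact G s (theta g f xs)"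
    using cochainsD(3)[OF f s xs] g_mem by (auto simp: theta_def cact_def fun_eq_iff)
qed

abbreviation gamma_cochain :: "('g list \<Rightarrow> 'r::comm_ring_1) \<Rightarrow> 'g list \<Rightarrow> 'g \<Rightarrow> 'r" where
  "gamma_cochain f \<equiv> transfer G (centralizer G g) (theta g f)"

lemma gamma_cochain_mem: "f \<in> triv_cochains G (centralizer G g) n \<Longrightarrow> gamma_cochain f \<in> galg_cochains G n"
  by (rule transfer_cochains[OF theta_cochains])

lemma gamma_cochain_cobound: "cobound G n (gamma_cochain f) = gamma_cochain (cobound G n f)"
  by (simp add: transfer_cobound theta_cobound)

lemma gamma_cochain_diff: "gamma_cochain (f - f') = gamma_cochain f - gamma_cochain (f' :: 'g list \<Rightarrow> 'r::comm_ring_1)"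
  by (simp add: additive.diff[OF additive_theta] transfer_diff)

lemma gamma_cochain_cobs:
  assumes "b \<in> triv_cobs G (centralizer G g) n"
  shows "gamma_cochain b \<in> galg_cobs G n"
proof (cases n)
  case 0
  then have b: "b = 0" using assms by (simp add: cobs_def)
  have "gamma_cochain b = 0" unfolding b by (simp add: theta_def transfer_apply fun_eq_iff zero_fun_def)
  then show ?thesis using is_group by simp
next
  case (Suc m)
  then obtain a where "a \<in> triv_cochains G (centralizer G g) m" "b = cobound G m a"
    using assms by (auto simp: cobs_def)
  then show ?thesis
    using galg_cobs_cobound[OF is_group gamma_cochain_mem] Suc by (simp add: gamma_cochain_cobound)
qed

lemma all_dvd_gamma_cochain: "(\<And>xs. p dvd f xs) \<Longrightarrow> all_dvd p (gamma_cochain f)"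
  by (intro transfer_all_dvd) (simp add: all_dvd_def theta_def)

lemma gamma_cochain_kcomb:
  "gamma_cochain (kcomb L) = kcomb_galg (map (\<lambda>(c, \<phi>). (c, gamma_cochain \<phi>)) (L :: ('k::field \<times> _) list))"
  by (simp add: theta_kcomb transfer_kcomb_galg comp_def split_def)

lemma bockc_gamma_cochain:
  assumes "int p \<noteq> 0" "\<phi> \<in> Ztp G (centralizer G g) (int p) r"
  shows "bockc G (int p) r (gamma_cochain \<phi>) = gamma_cochain (\<lambda>xs. cobound G r \<phi> xs div int p)"
proof -
  have "cobound G r (gamma_cochain \<phi>) = gamma_cochain (\<lambda>xs. int p * (cobound G r \<phi> xs div int p))"
    using assms by (simp add: gamma_cochain_cobound Ztp_def)
  also have "\<dots> = (\<lambda>xs y. int p * gamma_cochain (\<lambda>xs. cobound G r \<phi> xs div int p) xs y)"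
    by (simp add: theta_scale transfer_pointwise[OF additive_mult_left])
  finally show ?thesis using assms(1) by (simp add: bockc_def fun_eq_iff)
qed

end

context centralizer_element
begin

lemma gamma_clst:
  assumes f: "f \<in> triv_cochains G (centralizer G g) n"
  shows "gamma G g n (clst G (centralizer G g) n f) = clsk G n (gamma_cochain (f :: 'g list \<Rightarrow> 'k::field))"
proof -
  define u where "u = rep (clst G (centralizer G g) n f)"
  have "u - f \<in> triv_cobs G (centralizer G g) n" using rep_clst[OF is_group subset f] by (simp add: u_def)
  from gamma_cochain_cobs[OF this]
  have "gamma_cochain u - gamma_cochain f \<in> galg_cobs G n" by (simp add: gamma_cochain_diff)
  then show ?thesis
    by (simp add: gamma_def trc_eq_transfer thetac_eq_theta u_def[symmetric] clsk_eq[OF is_group]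
        galg_cohomologous_iff[OF is_group])
qed

lemma modp_cocycles_gamma_cochains:
  assumes "\<forall>x\<in>set L. snd x \<in> Ztp G (centralizer G g) (int p) r"
  shows "modp_cocycles G (int p) r (map (\<lambda>(c, \<phi>). (c, gamma_cochain \<phi>)) (L :: ('k::field \<times> _) list))"
  unfolding modp_cocycles_def
proof clarsimp
  fix c \<phi> assume "(c, \<phi>) \<in> set L"
  then have \<phi>: "\<phi> \<in> triv_cochains G (centralizer G g) r" "\<And>xs. int p dvd cobound G r \<phi> xs"
    using assms by (auto simp: Ztp_def)
  show "gamma_cochain \<phi> \<in> galg_cochains G r \<and> all_dvd (int p) (cobound G r (gamma_cochain \<phi>))"
    using gamma_cochain_mem[OF \<phi>(1)] all_dvd_gamma_cochain[OF \<phi>(2)] by (simp add: gamma_cochain_cobound)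
qed

lemma kcomb_bockc_Ztp_mem:
  assumes "\<forall>x\<in>set L. snd x \<in> Ztp G (centralizer G g) (int p) r"
  shows "kcomb (map (\<lambda>(c, \<phi>). (c, \<lambda>xs. cobound G r \<phi> xs div int p)) (L :: ('k::field \<times> _) list))
    \<in> triv_cochains G (centralizer G g) (Suc r)"
proof -
  have "(\<lambda>xs. cobound G r \<phi> xs div int p) \<in> triv_cochains G (centralizer G g) (Suc r)"
    if "\<phi> \<in> Ztp G (centralizer G g) (int p) r" for \<phi>
  proof -
    have "\<phi> \<in> triv_cochains G (centralizer G g) r" using that by (simp add: Ztp_def)
    from coeff_module.cobound_C[OF coeff_module_triv[OF is_group subset] this]
    show ?thesis by (rule triv_cochains_pointwise[where \<psi>="\<lambda>a. a div int p", rotated]) simp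
  qed
  then show ?thesis using assms by (intro kcomb_mem) auto
qed

lemma BockH_eq:
  assumes p: "prime p" and ch: "CHAR('k::field) = p" and X: "X \<in> (Ht G (centralizer G g) r :: ('g list \<Rightarrow> 'k) set set)"
  obtains L where "\<forall>x\<in>set L. snd x \<in> Ztp G (centralizer G g) (int p) r"
    "X = clst G (centralizer G g) r (kcomb L)"
    "BockH G (centralizer G g) (int p) r X
       = clst G (centralizer G g) (Suc r) (kcomb (map (\<lambda>(c, \<phi>). (c, \<lambda>xs. cobound G r \<phi> xs div int p)) L))"
proof -
  define P where "P = (\<lambda>L :: ('k \<times> ('g list \<Rightarrow> int)) list.
    (\<forall>j<length L. snd (L ! j) \<in> Ztp G (centralizer G g) (int p) r) \<and> clst G (centralizer G g) r (kcomb L) = X)"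
  have f: "rep X \<in> triv_cochains G (centralizer G g) r" "cobound G r (rep X) = 0"
    "X = clst G (centralizer G g) r (rep X)"
    using Ht_rep[OF is_group subset X] by auto
  obtain L1 where "\<forall>j<length L1. snd (L1 ! j) \<in> Ztp G (centralizer G g) (int p) r" "kcomb L1 = rep X"
    using exists_Ztp_decomposition[OF finite_carrier f(1,2) p ch] by blast
  then have "P L1" using f(3) by (simp add: P_def)
  then have PL: "P (SOME L. P L)" by (rule someI)
  show ?thesis
  proof (rule that)
    show "\<forall>x\<in>set (SOME L. P L). snd x \<in> Ztp G (centralizer G g) (int p) r"
    proof
      fix x assume "x \<in> set (SOME L. P L)"
      then obtain j where "j < length (SOME L. P L)" "x = (SOME L. P L) ! j" by (auto simp: in_set_conv_nth)
      with PL show "snd x \<in> Ztp G (centralizer G g) (int p) r" by (simp add: P_def)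
    qed
    show "X = clst G (centralizer G g) r (kcomb (SOME L. P L))" using PL by (simp add: P_def)
  qed (simp add: BockH_def P_def)
qed

end

context modular_group_algebra
begin

text \<open>Both sides reduce to \<open>\<gamma>\<close> applied to \<open>\<Sum> c\<^sub>j \<beta>(\<phi>\<^sub>j)\<close>, because transfer and \<open>\<theta>\<^sub>g\<close>
  commute with the coboundary and with division by \<open>p\<close>.\<close>
lemma bockstein_k_gamma:
  assumes g: "g \<in> carrier G" and X: "X \<in> (Ht G (centralizer G g) r :: ('g list \<Rightarrow> 'k) set set)"
  shows "bockstein_k G p r (gamma G g r X) = gamma G g (Suc r) (BockH G (centralizer G g) (int p) r X)"
proof -
  interpret centralizer_element G g
    using group finite g by (simp add: centralizer_element_def centralizer_element_axioms_def)
  obtain L where L: "\<forall>x\<in>set L. snd x \<in> Ztp G (centralizer G g) (int p) r"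
    and X_eq: "X = clst G (centralizer G g) r (kcomb L)"
    and B: "BockH G (centralizer G g) (int p) r X
       = clst G (centralizer G g) (Suc r) (kcomb (map (\<lambda>(c, \<phi>). (c, \<lambda>xs. cobound G r \<phi> xs div int p)) L))"
    by (rule BockH_eq[OF prime char X])
  define BL where "BL = map (\<lambda>(c, \<phi>). (c, \<lambda>xs. cobound G r \<phi> xs div int p)) L"
  define TL where "TL = map (\<lambda>(c, \<phi>). (c, gamma_cochain \<phi>)) L"
  have L_mem: "kcomb L \<in> triv_cochains G (centralizer G g) r"
    using L by (intro kcomb_mem) (auto simp: Ztp_def)
  have TL: "modp_cocycles G (int p) r TL" unfolding TL_def by (rule modp_cocycles_gamma_cochains[OF L])
  have kTL: "kcomb_galg TL = gamma_cochain (kcomb L)"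
    by (simp add: gamma_cochain_kcomb TL_def)
  have gamma_X: "gamma G g r X = clsk G r (kcomb_galg TL)"
    unfolding X_eq kTL by (rule gamma_clst[OF L_mem])
  have TL_mem: "kcomb_galg TL \<in> galg_cochains G r" using gamma_cochain_mem[OF L_mem] kTL by simp
  have TL_cocycle: "cobound G r (kcomb_galg TL) = 0"
    unfolding kTL gamma_cochain_cobound cobound_kcomb_Ztp[OF char L]
    by (simp add: theta_def transfer_apply fun_eq_iff zero_fun_def)
  have "bockstein_k G p r (gamma G g r X) = clsk G (Suc r) (kcomb_galg (bock_list G (int p) r TL))"
    unfolding gamma_X by (rule bockstein_k_clsk[OF TL_mem TL_cocycle TL galg_cohomologous_refl[OF group]])
  also have "bock_list G (int p) r TL = map (\<lambda>(c, \<phi>). (c, gamma_cochain \<phi>)) BL"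
    using L by (auto simp: TL_def BL_def bock_list_def bockc_gamma_cochain[OF p_nonzero])
  also have "kcomb_galg \<dots> = gamma_cochain (kcomb BL)" by (simp add: gamma_cochain_kcomb)
  also have "clsk G (Suc r) (gamma_cochain (kcomb BL)) = gamma G g (Suc r) (BockH G (centralizer G g) (int p) r X)"
    using gamma_clst[OF kcomb_bockc_Ztp_mem[OF L]] by (simp add: B BL_def)
  finally show ?thesis .
qed

end

lemma exists_bockstein_k:
  fixes G :: "('g, 'b) monoid_scheme" and R :: "'g set"
  assumes "group G" "finite (carrier G)" "prime p" "CHAR('k::field) = p" "R \<subseteq> carrier G"
  shows "\<exists>\<beta> :: nat \<Rightarrow> ('g list \<Rightarrow> 'g \<Rightarrow> 'k) set \<Rightarrow> ('g list \<Rightarrow> 'g \<Rightarrow> 'k) set.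
            (\<forall>r. \<forall>X\<in>Hk G r. \<beta> r X \<in> Hk G (Suc r))
          \<and> (\<forall>r c. \<forall>X\<in>Hk G r. \<forall>Y\<in>Hk G r.
               \<beta> r (Add_k G r (Smul_k G r c X) Y) = Add_k G (Suc r) (Smul_k G (Suc r) c (\<beta> r X)) (\<beta> r Y))
          \<and> (\<forall>g\<in>R. \<forall>r. \<forall>X\<in>Ht G (centralizer G g) r.
               \<beta> r (gamma G g r X) = gamma G g (Suc r) (BockH G (centralizer G g) (int p) r X))
          \<and> (\<forall>r. \<forall>X\<in>Hk G r. \<beta> (Suc r) (\<beta> r X) = clsk G (Suc (Suc r)) 0)
          \<and> (\<forall>m n. \<forall>X\<in>Hk G m. \<forall>Y\<in>Hk G n.
               \<beta> (m + n) (Cup_k G m n X Y)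
               = Add_k G (Suc (m + n)) (Cup_k G (Suc m) n (\<beta> m X) Y)
                   (Smul_k G (Suc (m + n)) ((-1) ^ m) (Cup_k G m (Suc n) X (\<beta> n Y))))"
proof -
  interpret modular_group_algebra G p "TYPE('k)"
    using assms by (simp add: modular_group_algebra_def)
  show ?thesis
    using bockstein_k_Hk bockstein_k_linear bockstein_k_gamma bockstein_k_bockstein_k
      bockstein_k_leibniz assms(5)
    by (intro exI[of _ "bockstein_k G p"] conjI allI ballI) auto
qed

theorem theorem2p4:
  fixes G :: "('g, 'b) monoid_scheme" and p :: nat and R :: "'g set"
  assumes "group G" and "finite (carrier G)" and "prime p" and "p dvd order G"
    and "R \<subseteq> carrier G" and "\<one>\<^bsub>G\<^esub> \<in> R"
    and "\<forall>x\<in>carrier G. \<exists>!g. g \<in> R \<and> (\<exists>h\<in>carrier G. x = h \<otimes>\<^bsub>G\<^esub> g \<otimes>\<^bsub>G\<^esub> inv\<^bsub>G\<^esub> h)"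
  shows
    "(\<forall>n. \<forall>X\<in>Hp G (int p) n. BockG G (int p) n X \<in> Hp G (int p) (Suc n))
     \<and> (\<forall>n. \<forall>X\<in>Hp G (int p) n.
           BockG G (int p) (Suc n) (BockG G (int p) n X) = clsp G (int p) (Suc (Suc n)) 0)
     \<and> (\<forall>m n. \<forall>X\<in>Hp G (int p) m. \<forall>Y\<in>Hp G (int p) n.
           BockG G (int p) (m + n) (Cup_p G (int p) m n X Y)
           = Add_p G (int p) (Suc (m + n))
               (Cup_p G (int p) (Suc m) n (BockG G (int p) m X) Y)
               (Smul_p G (int p) (Suc (m + n)) ((-1) ^ m) (Cup_p G (int p) m (Suc n) X (BockG G (int p) n Y))))
     \<and> (\<forall>(k_witness :: 'k::field itself). CHAR('k) = p \<longrightarrow>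
         (\<exists>\<beta> :: nat \<Rightarrow> ('g list \<Rightarrow> 'g \<Rightarrow> 'k) set \<Rightarrow> ('g list \<Rightarrow> 'g \<Rightarrow> 'k) set.
            (\<forall>r. \<forall>X\<in>Hk G r. \<beta> r X \<in> Hk G (Suc r))
          \<and> (\<forall>r c. \<forall>X\<in>Hk G r. \<forall>Y\<in>Hk G r.
               \<beta> r (Add_k G r (Smul_k G r c X) Y) = Add_k G (Suc r) (Smul_k G (Suc r) c (\<beta> r X)) (\<beta> r Y))
          \<and> (\<forall>g\<in>R. \<forall>r. \<forall>X\<in>Ht G (centralizer G g) r.
               \<beta> r (gamma G g r X) = gamma G g (Suc r) (BockH G (centralizer G g) (int p) r X))
          \<and> (\<forall>r. \<forall>X\<in>Hk G r. \<beta> (Suc r) (\<beta> r X) = clsk G (Suc (Suc r)) 0)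
          \<and> (\<forall>m n. \<forall>X\<in>Hk G m. \<forall>Y\<in>Hk G n.
               \<beta> (m + n) (Cup_k G m n X Y)
               = Add_k G (Suc (m + n)) (Cup_k G (Suc m) n (\<beta> m X) Y)
                   (Smul_k G (Suc (m + n)) ((-1) ^ m) (Cup_k G m (Suc n) X (\<beta> n Y))))))"
proof -
  have p: "int p \<noteq> 0" using assms(3) by (auto simp: prime_gt_0_nat)
  show ?thesis
  proof (intro conjI allI ballI impI)
    fix n X assume "X \<in> Hp G (int p) n"
    then show "BockG G (int p) n X \<in> Hp G (int p) (Suc n)"
      and "BockG G (int p) (Suc n) (BockG G (int p) n X) = clsp G (int p) (Suc (Suc n)) 0"
      by (simp_all add: BockG_Hp[OF assms(1) p] BockG_BockG[OF assms(1) p])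
  next
    fix m n X Y assume "X \<in> Hp G (int p) m" "Y \<in> Hp G (int p) n"
    then show "BockG G (int p) (m + n) (Cup_p G (int p) m n X Y)
           = Add_p G (int p) (Suc (m + n))
               (Cup_p G (int p) (Suc m) n (BockG G (int p) m X) Y)
               (Smul_p G (int p) (Suc (m + n)) ((-1) ^ m) (Cup_p G (int p) m (Suc n) X (BockG G (int p) n Y)))"
      by (rule Hp_leibniz[OF assms(1) p])
  qed (rule exists_bockstein_k[OF assms(1-3) _ assms(5)])
qed

end
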